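(* Let $(L^+,L^-)$ be a pair of fully transverse prelaminations of $S^1$. For any nontrivial complementary region $C$ of $L^\pm$, the linkage graph $\Gamma(C;L^\mp)$ is connected.
   Context: $\mathbb D^2$ is the closed unit disc with boundary $S^1$. Pairs $\{a_1,a_2\},\{b_1,b_2\}$ of distinct points of $S^1$ cross if $a_1,a_2$ lie in different components of $S^1\setminus\{b_1,b_2\}$. A prelamination is a set of unordered pairs of distinct points of $S^1$ (leaves) no two crossing; $\mathrm{Geo}(L)$ is the union of Euclidean chords joining endpoints of leaves. $(L^+,L^-)$ is fully transverse if $L^+\cap L^-=\emptyset$, endpoints of $L^+\cup L^-$ are dense in $S^1$, and any two leaves of $L^+\cup L^-$ are joined by a finite chain of leaves each crossing the next. A complementary region of $L$ is the closure of a component of $\mathbb D^2\setminus\mathrm{Geo}(L)$; nontrivial if it is not a single chord; its boundary chords are its geodesic sides. For a nontrivial complementary region $C$ of $L^\pm$, an ideal segment of $C$ is a compact arc $I\subset S^1$ with nonempty interior such that for a single geodesic side $\alpha$ of $C$ the endpoints of $L^\mp$-leaves crossing $\alpha$ are dense in the interior of $I$, and $I$ is maximal with this property. The linkage graph $\Gamma(C;L^\mp)$ has as vertices the geodesic sides and the ideal segments of $C$; two distinct vertices are joined by an edge if some leaf of $L^\mp$ intersects both, where intersecting a geodesic side means crossing that chord and intersecting an ideal segment means having an endpoint in its interior. *)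

theory Defs
  imports "HOL-Analysis.Analysis"
begin

abbreviation S1 :: "complex set" where "S1 \<equiv> sphere 0 1"
abbreviation D2 :: "complex set" where "D2 \<equiv> cball 0 1"

definition is_leaf :: "complex set \<Rightarrow> bool" where
  "is_leaf l \<longleftrightarrow> (\<exists>a b. a \<noteq> b \<and> a \<in> S1 \<and> b \<in> S1 \<and> l = {a, b})"

definition crosses :: "complex set \<Rightarrow> complex set \<Rightarrow> bool" where
  "crosses l m \<longleftrightarrow> is_leaf l \<and> is_leaf m \<and>
     (\<exists>a1 a2. l = {a1, a2} \<and> a1 \<in> S1 - m \<and> a2 \<in> S1 - m \<and>
        \<not> connected_component (S1 - m) a1 a2)"

definition prelamination :: "complex set set \<Rightarrow> bool" where
  "prelamination L \<longleftrightarrow> (\<forall>l\<in>L. is_leaf l) \<and> (\<forall>l\<in>L. \<forall>m\<in>L. \<not> crosses l m)"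

definition Geo :: "complex set set \<Rightarrow> complex set" where
  "Geo L = \<Union>{closed_segment a b | a b. {a, b} \<in> L}"

definition fully_transverse :: "complex set set \<Rightarrow> complex set set \<Rightarrow> bool" where
  "fully_transverse Lp Lm \<longleftrightarrow> prelamination Lp \<and> prelamination Lm \<and> Lp \<inter> Lm = {} \<and>
     S1 \<subseteq> closure (\<Union>(Lp \<union> Lm)) \<and>
     (\<forall>l\<in>Lp \<union> Lm. \<forall>m\<in>Lp \<union> Lm.
        (\<lambda>x y. x \<in> Lp \<union> Lm \<and> y \<in> Lp \<union> Lm \<and> crosses x y)\<^sup>*\<^sup>* l m)"

definition compl_region :: "complex set set \<Rightarrow> complex set \<Rightarrow> bool" where
  "compl_region L C \<longleftrightarrow>
     (\<exists>x \<in> D2 - Geo L. C = closure (connected_component_set (D2 - Geo L) x))"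

definition nontrivial_region :: "complex set set \<Rightarrow> complex set \<Rightarrow> bool" where
  "nontrivial_region L C \<longleftrightarrow> compl_region L C \<and>
     \<not> (\<exists>a b. a \<noteq> b \<and> a \<in> S1 \<and> b \<in> S1 \<and> C = closed_segment a b)"

definition geodesic_side :: "complex set \<Rightarrow> complex set \<Rightarrow> bool" where
  "geodesic_side C s \<longleftrightarrow>
     (\<exists>a b. a \<noteq> b \<and> a \<in> S1 \<and> b \<in> S1 \<and> s = {a, b} \<and> closed_segment a b \<subseteq> frontier C)"

definition compact_arc :: "complex set \<Rightarrow> bool" where
  "compact_arc I \<longleftrightarrow> (\<exists>g. arc g \<and> path_image g = I) \<and> I \<subseteq> S1"

definition int_S1 :: "complex set \<Rightarrow> complex set" where
  "int_S1 I = (top_of_set S1) interior_of I"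

definition cross_endpoints :: "complex set set \<Rightarrow> complex set \<Rightarrow> complex set" where
  "cross_endpoints L' s = \<Union>{l \<in> L'. crosses l s}"

definition dense_arc_for :: "complex set set \<Rightarrow> complex set \<Rightarrow> complex set \<Rightarrow> bool" where
  "dense_arc_for L' s I \<longleftrightarrow> compact_arc I \<and> int_S1 I \<noteq> {} \<and>
     int_S1 I \<subseteq> closure (cross_endpoints L' s \<inter> int_S1 I)"

definition ideal_segment :: "complex set \<Rightarrow> complex set set \<Rightarrow> complex set \<Rightarrow> bool" where
  "ideal_segment C L' I \<longleftrightarrow>
     (\<exists>s. geodesic_side C s \<and> dense_arc_for L' s I \<and>
          (\<forall>J. I \<subseteq> J \<and> dense_arc_for L' s J \<longrightarrow> J = I))"

definition linkage_vertex :: "complex set \<Rightarrow> complex set set \<Rightarrow> complex set + complex set \<Rightarrow> bool" where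
  "linkage_vertex C L' v \<longleftrightarrow> (case v of Inl s \<Rightarrow> geodesic_side C s | Inr I \<Rightarrow> ideal_segment C L' I)"

definition leaf_meets :: "complex set \<Rightarrow> complex set + complex set \<Rightarrow> bool" where
  "leaf_meets l v \<longleftrightarrow> (case v of Inl s \<Rightarrow> crosses l s | Inr I \<Rightarrow> l \<inter> int_S1 I \<noteq> {})"

definition linkage_edge :: "complex set \<Rightarrow> complex set set \<Rightarrow>
    complex set + complex set \<Rightarrow> complex set + complex set \<Rightarrow> bool" where
  "linkage_edge C L' u v \<longleftrightarrow> linkage_vertex C L' u \<and> linkage_vertex C L' v \<and> u \<noteq> v \<and>
     (\<exists>l\<in>L'. leaf_meets l u \<and> leaf_meets l v)"

definition linkage_connected :: "complex set \<Rightarrow> complex set set \<Rightarrow> bool" where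
  "linkage_connected C L' \<longleftrightarrow>
     (\<forall>u v. linkage_vertex C L' u \<and> linkage_vertex C L' v \<longrightarrow> (linkage_edge C L')\<^sup>*\<^sup>* u v)"

end

theory Submission
  imports Defs
begin

text \<open>A nontrivial complementary region \<open>C\<close> of \<open>L\<close> is the intersection of the disc with the closed
  half-planes, bounded by the chords of the leaves of \<open>L\<close>, that contain a base point \<open>x0\<close>. Hence
  \<open>C\<close> is closed and convex, and each geodesic side \<open>{a, b}\<close> of \<open>C\<close> is a chord with all of \<open>C\<close> on
  one side of it. Every ideal segment is joined by an edge to the geodesic side it comes from, so it
  suffices to link any two sides. Whether two chords cross is read off from the sign of the
  orientation function \<open>orient\<close>, and every leaf of \<open>L\<close> lies in the cap cut off by some side of \<open>C\<close>.

  Given sides \<open>{a, b}\<close> and \<open>{c, d}\<close>, join a leaf of \<open>L\<close> in the cap of \<open>{a, b}\<close> to a leaf of \<open>L\<close>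
  in the cap of \<open>{c, d}\<close> by a chain of crossing leaves of \<open>L \<union> L'\<close> (full transversality). Every
  leaf of the chain lies in the cap of, or crosses, a side linked to \<open>{a, b}\<close>: a leaf of \<open>L'\<close> that
  crosses such a side and also crosses a leaf of \<open>L\<close> lying in the cap of another side must cross
  that side too, which is an edge of the linkage graph. At the end of the chain this forces \<open>{c, d}\<close>
  to be linked to \<open>{a, b}\<close>.\<close>

section \<open>Orientation of triples of points\<close>

text \<open>Twice the signed area of the triangle \<open>a b z\<close>: positive iff \<open>z\<close> lies to the left of the line
  from \<open>a\<close> to \<open>b\<close>.\<close>

definition orient :: "complex \<Rightarrow> complex \<Rightarrow> complex \<Rightarrow> real" where
  "orient a b z = Im ((z - a) * cnj (b - a))"

lemma orient_swap: "orient b a z = - orient a b z"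
  unfolding orient_def by (simp add: algebra_simps)

lemma orient_left [simp]: "orient a b a = 0" and orient_right [simp]: "orient a b b = 0"
  unfolding orient_def by (auto simp: algebra_simps)

lemma orient_same [simp]: "orient a a z = 0"
  unfolding orient_def by simp

lemma orient_convex_comb:
  "orient a b ((1 - u) *\<^sub>R p + u *\<^sub>R q) = (1 - u) * orient a b p + u * orient a b q"
  unfolding orient_def scaleR_conv_of_real by (simp add: algebra_simps)

lemma orient_add: "orient a b (y + d) = orient a b y + Im (d * cnj (b - a))"
  unfolding orient_def by (simp add: algebra_simps)

lemma continuous_on_orient [continuous_intros]: "continuous_on S (orient a b)"
  unfolding orient_def by (intro continuous_intros)

lemma orient_rotate: "norm w = 1 \<Longrightarrow> orient (w * a) (w * b) (w * z) = orient a b z"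
proof -
  assume "norm w = 1"
  then have "w * cnj w = 1" using complex_norm_square[of w] by simp
  moreover have "(w*z - w*a) * cnj (w*b - w*a) = (w * cnj w) * ((z - a) * cnj (b - a))"
    by (simp add: algebra_simps)
  ultimately show ?thesis unfolding orient_def by simp
qed

lemma orient_cis:
  "orient (cis s) (cis t) (cis r) = 4 * sin ((r - s) / 2) * sin ((t - s) / 2) * sin ((r - t) / 2)"
proof -
  have product_to_sum:
    "sin (2 * (x - y)) - sin (2 * x) + sin (2 * y) = 4 * sin x * sin y * sin (x - y)" for x y :: real
  proof -
    have "sin (2 * x) - sin (2 * y) = 2 * cos (x + y) * sin (x - y)"
      using sin_diff_sin[of "2 * x" "2 * y"]
      by (simp add: algebra_simps add_divide_distrib diff_divide_distrib)
    moreover have "sin (2 * (x - y)) = 2 * sin (x - y) * cos (x - y)" by (rule sin_double)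
    moreover have "cos (x - y) - cos (x + y) = 2 * sin x * sin y" by (simp add: cos_diff cos_add)
    ultimately show ?thesis by (simp add: algebra_simps)
  qed
  have "orient (cis s) (cis t) (cis r) = sin (r - t) - sin (r - s) + sin (t - s)"
    unfolding orient_def by (simp add: algebra_simps cis_mult cis_cnj sin_diff cos_diff)
  also have "\<dots> =
      sin (2 * ((r - s) / 2 - (t - s) / 2)) - sin (2 * ((r - s) / 2)) + sin (2 * ((t - s) / 2))"
    by (simp add: algebra_simps diff_divide_distrib)
  also have "\<dots> = 4 * sin ((r - s) / 2) * sin ((t - s) / 2) * sin ((r - t) / 2)"
    unfolding product_to_sum by (simp add: field_simps)
  finally show ?thesis .
qed

text \<open>The circle parametrised by the angle seen from the antipode of \<open>a0\<close>: the parameter range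
  \<open>{-pi<..pi}\<close> covers the circle once and both ends of \<open>[-pi, pi]\<close> are mapped to \<open>a0\<close>.\<close>

definition circ :: "complex \<Rightarrow> real \<Rightarrow> complex" where
  "circ a0 t = - a0 * cis t"

definition angle_from :: "complex \<Rightarrow> complex \<Rightarrow> real" where
  "angle_from a0 z = Arg (z / - a0)"

lemma norm_circ [simp]: "norm (circ a0 t) = norm a0"
  unfolding circ_def by (simp add: norm_mult)

lemma circ_pi [simp]: "a0 \<in> S1 \<Longrightarrow> circ a0 pi = a0" "a0 \<in> S1 \<Longrightarrow> circ a0 (- pi) = a0"
  unfolding circ_def by (simp_all add: complex_eq_iff)

lemma circ_minus_one [simp]: "circ (- 1) t = cis t"
  unfolding circ_def by simp

lemma continuous_on_circ [continuous_intros]: "continuous_on S (circ a0)"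
  unfolding circ_def by (intro continuous_intros)

lemma angle_from_in_range: "angle_from a0 z \<in> {-pi<..pi}"
  unfolding angle_from_def using mpi_less_Arg Arg_le_pi by simp

lemma circ_angle_from [simp]: "a0 \<in> S1 \<Longrightarrow> z \<in> S1 \<Longrightarrow> circ a0 (angle_from a0 z) = z"
proof -
  assume "a0 \<in> S1" "z \<in> S1"
  then have "a0 \<noteq> 0" "z / - a0 \<noteq> 0" and "sgn (z / - a0) = z / - a0"
    by (auto simp: sgn_div_norm norm_divide)
  then show ?thesis unfolding circ_def angle_from_def by (simp add: cis_Arg)
qed

lemma angle_from_circ: "a0 \<in> S1 \<Longrightarrow> t \<in> {-pi<..pi} \<Longrightarrow> angle_from a0 (circ a0 t) = t"
  unfolding circ_def angle_from_def by (auto simp: Arg_cis)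

lemma angle_from_self: "a0 \<in> S1 \<Longrightarrow> angle_from a0 a0 = pi"
  using angle_from_circ[of a0 pi] by simp

lemma angle_from_inj:
  "a0 \<in> S1 \<Longrightarrow> a \<in> S1 \<Longrightarrow> b \<in> S1 \<Longrightarrow> angle_from a0 a = angle_from a0 b \<longleftrightarrow> a = b"
  by (metis circ_angle_from)

lemma angle_from_Arg [simp]: "angle_from (- 1) z = Arg z"
  unfolding angle_from_def by simp

lemma orient_circ:
  "a0 \<in> S1 \<Longrightarrow> orient (circ a0 s) (circ a0 t) (circ a0 r) =
     4 * sin ((r - s) / 2) * sin ((t - s) / 2) * sin ((r - t) / 2)"
proof -
  assume "a0 \<in> S1"
  then have "norm (- a0) = 1" by simp
  then show ?thesis by (simp only: circ_def orient_rotate orient_cis)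
qed

text \<open>For angles in \<open>{-pi<..pi}\<close>: \<open>r\<close> lies on the open counterclockwise arc from \<open>s\<close> to \<open>t\<close>.\<close>

definition ccw_between :: "real \<Rightarrow> real \<Rightarrow> real \<Rightarrow> bool" where
  "ccw_between s t r \<longleftrightarrow> (s < t \<and> s < r \<and> r < t) \<or> (t < s \<and> (r < t \<or> s < r))"

lemma sgn_sin_half:
  assumes "-2 * pi < x" "x < 2 * pi"
  shows "sgn (sin (x / 2)) = sgn x"
proof (cases x "0::real" rule: linorder_cases)
  case less
  then have "sin (- x / 2) > 0" using assms by (intro sin_gt_zero) auto
  then show ?thesis using less by simp
next
  case greater
  then have "sin (x / 2) > 0" using assms by (intro sin_gt_zero) auto
  then show ?thesis using greater by simp
qed simp

lemma sgn_orient_circ: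
  assumes "a0 \<in> S1" "s \<in> {-pi<..pi}" "t \<in> {-pi<..pi}" "r \<in> {-pi<..pi}"
  shows "sgn (orient (circ a0 s) (circ a0 t) (circ a0 r)) = sgn ((r - s) * (t - s) * (r - t))"
  using assms by (simp add: orient_circ sgn_mult sgn_sin_half)

lemma mult3_less_0_iff_ccw_between:
  "(r - s) * (t - s) * (r - t) < (0::real) \<longleftrightarrow> ccw_between s t r"
proof -
  have "x * y * z < (0::real) \<longleftrightarrow> sgn x * sgn y * sgn z = -1" for x y z :: real
  proof -
    have "x * y * z < 0 \<longleftrightarrow> sgn (x * y * z) = -1"
      by (cases "x * y * z" "0::real" rule: linorder_cases) (auto simp: sgn_real_def)
    then show ?thesis by (simp only: sgn_mult)
  qed
  then show ?thesis unfolding ccw_between_def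
    by (cases r s rule: linorder_cases; cases t s rule: linorder_cases; cases r t rule: linorder_cases)
       (auto simp: sgn_real_def)
qed

lemma orient_circ_less_0_iff:
  assumes "a0 \<in> S1" "s \<in> {-pi<..pi}" "t \<in> {-pi<..pi}" "r \<in> {-pi<..pi}"
  shows "orient (circ a0 s) (circ a0 t) (circ a0 r) < 0 \<longleftrightarrow> ccw_between s t r"
proof -
  have "x < 0 \<longleftrightarrow> sgn x = - 1" for x :: real by (auto simp: sgn_real_def)
  then show ?thesis
    using sgn_orient_circ[OF assms] mult3_less_0_iff_ccw_between by metis
qed

lemma orient_circ_greater_0_iff:
  assumes "a0 \<in> S1" "s \<in> {-pi<..pi}" "t \<in> {-pi<..pi}" "r \<in> {-pi<..pi}"
  shows "orient (circ a0 s) (circ a0 t) (circ a0 r) > 0 \<longleftrightarrow> ccw_between t s r"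
  using orient_circ_less_0_iff[OF assms(1,3,2,4)] orient_swap[of "circ a0 t" "circ a0 s" "circ a0 r"]
  by linarith

lemma orient_S1_less_0_iff:
  "a \<in> S1 \<Longrightarrow> b \<in> S1 \<Longrightarrow> z \<in> S1 \<Longrightarrow>
    orient a b z < 0 \<longleftrightarrow> ccw_between (Arg a) (Arg b) (Arg z)"
  using orient_circ_less_0_iff[of "- 1" "Arg a" "Arg b" "Arg z"] circ_angle_from[of "- 1"]
  by (simp add: angle_from_in_range[of "- 1", simplified])

lemma orient_S1_greater_0_iff:
  "a \<in> S1 \<Longrightarrow> b \<in> S1 \<Longrightarrow> z \<in> S1 \<Longrightarrow>
    orient a b z > 0 \<longleftrightarrow> ccw_between (Arg b) (Arg a) (Arg z)"
  using orient_S1_less_0_iff[of b a z] orient_swap[of a b z] by linarith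

lemma Arg_S1_inj: "a \<in> S1 \<Longrightarrow> b \<in> S1 \<Longrightarrow> Arg a = Arg b \<longleftrightarrow> a = b"
  using angle_from_inj[of "- 1" a b] by simp

lemma orient_S1_eq_0_iff:
  assumes "a \<in> S1" "b \<in> S1" "z \<in> S1" "a \<noteq> b"
  shows "orient a b z = 0 \<longleftrightarrow> z = a \<or> z = b"
proof -
  have "Arg a \<noteq> Arg b" using assms Arg_S1_inj by blast
  then have "orient a b z = 0 \<longleftrightarrow> Arg z = Arg a \<or> Arg z = Arg b"
    using orient_S1_less_0_iff[OF assms(1-3)] orient_S1_greater_0_iff[OF assms(1-3)]
    unfolding ccw_between_def by (smt (verit))
  then show ?thesis using Arg_S1_inj assms by blast
qed

lemma orient_S1_le_0_iff:
  "a \<in> S1 \<Longrightarrow> b \<in> S1 \<Longrightarrow> z \<in> S1 \<Longrightarrow>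
    orient a b z \<le> 0 \<longleftrightarrow> \<not> ccw_between (Arg b) (Arg a) (Arg z)"
  using orient_S1_greater_0_iff by (simp add: not_less[symmetric])

lemma orient_S1_ge_0_iff:
  "a \<in> S1 \<Longrightarrow> b \<in> S1 \<Longrightarrow> z \<in> S1 \<Longrightarrow>
    orient a b z \<ge> 0 \<longleftrightarrow> \<not> ccw_between (Arg a) (Arg b) (Arg z)"
  using orient_S1_less_0_iff by (simp add: not_less[symmetric])

lemmas orient_S1_sign_iffs =
  orient_S1_less_0_iff orient_S1_greater_0_iff orient_S1_le_0_iff orient_S1_ge_0_iff

lemma orient_cross_sym:
  assumes "a \<in> S1" "b \<in> S1" "p \<in> S1" "q \<in> S1" "a \<noteq> b" "p \<noteq> q"
  shows "orient a b p * orient a b q < 0 \<longleftrightarrow> orient p q a * orient p q b < 0"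
proof -
  have "Arg a \<noteq> Arg b" "Arg p \<noteq> Arg q" using assms Arg_S1_inj by auto
  then show ?thesis
    using assms by (simp add: mult_less_0_iff orient_S1_sign_iffs ccw_between_def) smt
qed

lemma cap_crossing:
  assumes "a \<in> S1" "b \<in> S1" "z1 \<in> S1" "z2 \<in> S1" "p \<in> S1" "q \<in> S1" "a \<noteq> b" "z1 \<noteq> z2"
    and "orient a b z1 \<le> 0" "orient a b z2 \<le> 0" "orient z1 z2 p * orient z1 z2 q < 0"
  shows "orient a b p < 0 \<or> orient a b q < 0"
proof -
  have "Arg a \<noteq> Arg b" "Arg z1 \<noteq> Arg z2" using assms Arg_S1_inj by auto
  then show ?thesis
    using assms by (simp add: mult_less_0_iff orient_S1_sign_iffs ccw_between_def) smt
qed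

lemma caps_disjoint:
  assumes "a \<in> S1" "b \<in> S1" "c \<in> S1" "d \<in> S1" "z \<in> S1" "a \<noteq> b" "c \<noteq> d" "{a, b} \<noteq> {c, d}"
    and "orient a b c \<ge> 0" "orient a b d \<ge> 0" "orient c d a \<ge> 0" "orient c d b \<ge> 0"
    and "orient a b z < 0"
  shows "orient c d z > 0"
proof -
  have "Arg a \<noteq> Arg b" "Arg c \<noteq> Arg d"
    "\<not> (Arg a = Arg c \<and> Arg b = Arg d)" "\<not> (Arg a = Arg d \<and> Arg b = Arg c)"
    using assms Arg_S1_inj by auto
  then show ?thesis
    using assms by (simp add: orient_S1_sign_iffs ccw_between_def) smt
qed

lemma cap_same_side:
  assumes "a \<in> S1" "b \<in> S1" "w1 \<in> S1" "w2 \<in> S1" "p \<in> S1" "a \<noteq> b" "w1 \<noteq> w2"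
    and "orient a b w1 \<ge> 0" "orient a b w2 \<ge> 0" "orient a b p < 0"
  shows "orient w1 w2 p * orient w1 w2 a \<ge> 0" "orient w1 w2 p * orient w1 w2 b \<ge> 0"
proof -
  have "Arg a \<noteq> Arg b" "Arg w1 \<noteq> Arg w2" using assms Arg_S1_inj by auto
  then show "orient w1 w2 p * orient w1 w2 a \<ge> 0" "orient w1 w2 p * orient w1 w2 b \<ge> 0"
    using assms by (simp_all add: zero_le_mult_iff orient_S1_sign_iffs ccw_between_def) smt+
qed

section \<open>Crossing chords\<close>

lemma connected_nonvanishing_same_sign:
  fixes f :: "'a::topological_space \<Rightarrow> real"
  assumes "connected T" "continuous_on T f" "\<forall>w\<in>T. f w \<noteq> 0" "x \<in> T" "y \<in> T"
  shows "f x * f y > 0"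
proof (rule ccontr)
  assume "\<not> f x * f y > 0"
  then have "(f x \<le> 0 \<and> 0 \<le> f y) \<or> (f y \<le> 0 \<and> 0 \<le> f x)"
    by (auto simp: zero_less_mult_iff)
  then obtain p q where pq: "p \<in> T" "q \<in> T" "f p \<le> 0" "0 \<le> f q"
    using assms(4,5) by blast
  have "connected (f ` T)" using assms by (intro connected_continuous_image)
  then have "0 \<in> f ` T"
    unfolding connected_iff_interval using pq by blast
  then show False using assms(3) by auto
qed

lemma sgn_orient_from_base:
  assumes "a \<in> S1" "t \<in> {-pi<..<pi}" "r \<in> {-pi<..<pi}"
  shows "sgn (orient a (circ a t) (circ a r)) = sgn (r - t)"
proof -
  have "sgn (orient (circ a pi) (circ a t) (circ a r)) = sgn ((r - pi) * (t - pi) * (r - t))"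
    using assms by (intro sgn_orient_circ) auto
  also have "\<dots> = sgn (r - t)"
    using assms by (simp add: sgn_mult)
  finally show ?thesis using assms(1) by simp
qed

lemma angle_from_less_pi:
  assumes "a \<in> S1" "w \<in> S1" "w \<noteq> a"
  shows "angle_from a w \<in> {-pi<..<pi}"
proof -
  have "angle_from a w \<noteq> pi"
  proof
    assume "angle_from a w = pi"
    then have "w = circ a pi" using circ_angle_from[OF assms(1,2)] by simp
    then show False using assms by simp
  qed
  then show ?thesis using angle_from_in_range[of a w] by simp
qed

lemma S1_diff_arc_component:
  assumes "a \<in> S1" "b \<in> S1" "is_interval I" "I \<subseteq> {-pi<..<pi}" "angle_from a b \<notin> I"
    and "w \<in> S1" "w' \<in> S1" "angle_from a w \<in> I" "angle_from a w' \<in> I"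
  shows "connected_component (S1 - {a, b}) w w'"
proof (rule connected_componentI)
  show "connected (circ a ` I)"
    using assms(3)
      by (intro connected_continuous_image continuous_intros) (simp add: is_interval_connected)
  have "circ a r \<noteq> a \<and> circ a r \<noteq> b" if "r \<in> I" for r
  proof -
    have "angle_from a (circ a r) = r" "r \<noteq> pi" "r \<noteq> angle_from a b"
      using that assms(4,5) angle_from_circ[OF assms(1)] by auto
    then show ?thesis using angle_from_self[OF assms(1)] by auto
  qed
  then show "circ a ` I \<subseteq> S1 - {a, b}" using assms(1) by auto
  have "v \<in> circ a ` I" if "v \<in> S1" "angle_from a v \<in> I" for v
  proof (rule image_eqI)
    show "v = circ a (angle_from a v)" using that assms(1) by simp
  qed (use that in simp)
  then show "w \<in> circ a ` I" "w' \<in> circ a ` I" using assms(6-9) by auto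
qed

lemma S1_diff_chord_component_iff:
  assumes "a \<in> S1" "b \<in> S1" "a \<noteq> b" "z \<in> S1 - {a, b}" "z' \<in> S1 - {a, b}"
  shows "connected_component (S1 - {a, b}) z z' \<longleftrightarrow> orient a b z * orient a b z' > 0"
proof
  assume "connected_component (S1 - {a, b}) z z'"
  moreover define K where "K = connected_component_set (S1 - {a, b}) z"
  moreover have "\<forall>w\<in>K. orient a b w \<noteq> 0"
  proof
    fix w assume "w \<in> K"
    then have "w \<in> S1 - {a, b}" using connected_component_subset unfolding K_def by blast
    then show "orient a b w \<noteq> 0" using orient_S1_eq_0_iff[OF assms(1,2) _ assms(3)] by blast
  qed
  ultimately show "orient a b z * orient a b z' > 0"
    using assms(4) by (intro connected_nonvanishing_same_sign[of K]) (auto intro: continuous_intros)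
next
  define t where "t = angle_from a b"
  have t: "t \<in> {-pi<..<pi}" unfolding t_def using angle_from_less_pi[OF assms(1,2)] assms(3) by simp
  have b: "circ a t = b" unfolding t_def using assms by simp
  have arc: "angle_from a w \<in> {-pi<..<pi}" "sgn (orient a b w) = sgn (angle_from a w - t)"
    if "w \<in> S1 - {a, b}" for w
  proof -
    show range: "angle_from a w \<in> {-pi<..<pi}" using angle_from_less_pi[OF assms(1)] that by auto
    show "sgn (orient a b w) = sgn (angle_from a w - t)"
      using sgn_orient_from_base[OF assms(1) t range] that assms(1) b by simp
  qed
  assume "orient a b z * orient a b z' > 0"
  then consider "orient a b z < 0" "orient a b z' < 0" | "orient a b z > 0" "orient a b z' > 0"
    by (auto simp: zero_less_mult_iff)
  then show "connected_component (S1 - {a, b}) z z'"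
  proof cases
    case 1
    have in_arc: "angle_from a w \<in> {-pi<..<t}" if "w \<in> {z, z'}" for w
    proof -
      have "orient a b w < 0" "w \<in> S1 - {a, b}" using 1 that assms(4,5) by auto
      then show ?thesis using arc[of w] sgn_less[of "orient a b w"] by auto
    qed
    show ?thesis
      by (intro S1_diff_arc_component[OF assms(1,2) is_interval_oo[of "-pi" t]])
         (use in_arc t assms(4,5) in \<open>auto simp flip: t_def\<close>)
  next
    case 2
    have in_arc: "angle_from a w \<in> {t<..<pi}" if "w \<in> {z, z'}" for w
    proof -
      have "orient a b w > 0" "w \<in> S1 - {a, b}" using 2 that assms(4,5) by auto
      then show ?thesis using arc[of w] sgn_greater[of "orient a b w"] by (auto simp: sgn_1_pos)
    qed
    show ?thesis
      by (intro S1_diff_arc_component[OF assms(1,2) is_interval_oo[of t pi]])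
         (use in_arc t assms(4,5) in \<open>auto simp flip: t_def\<close>)
  qed
qed

lemma leaf_endpoints: "is_leaf {a, b} \<Longrightarrow> a \<in> S1 \<and> b \<in> S1 \<and> a \<noteq> b"
  unfolding is_leaf_def by (auto simp: doubleton_eq_iff)

lemma crosses_iff_orient:
  assumes "p \<in> S1" "q \<in> S1" "a \<in> S1" "b \<in> S1" "p \<noteq> q" "a \<noteq> b"
  shows "crosses {p, q} {a, b} \<longleftrightarrow> orient a b p * orient a b q < 0"
proof -
  have leaves: "is_leaf {p, q}" "is_leaf {a, b}" unfolding is_leaf_def using assms by blast+
  have "crosses {p, q} {a, b} \<longleftrightarrow>
      p \<in> S1 - {a, b} \<and> q \<in> S1 - {a, b} \<and> \<not> connected_component (S1 - {a, b}) p q"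
    unfolding crosses_def using leaves assms(5)
    by (auto simp: doubleton_eq_iff connected_component_sym)
  also have "\<dots> \<longleftrightarrow> orient a b p * orient a b q < 0"
    using S1_diff_chord_component_iff[OF assms(3,4,6)] orient_S1_eq_0_iff assms
    by (auto simp: not_less zero_less_mult_iff mult_less_0_iff less_le)
  finally show ?thesis .
qed

lemma orient_closed_segment: "z \<in> closed_segment a b \<Longrightarrow> orient a b z = 0"
  unfolding closed_segment_def using orient_convex_comb by auto

lemma orient_eq_0_imp_on_line:
  assumes "a \<noteq> b" "orient a b z = 0"
  obtains t where "z = (1 - t) *\<^sub>R a + t *\<^sub>R b"
proof -
  define v where "v = b - a"
  define t where "t = (Re (z - a) * Re v + Im (z - a) * Im v) / ((Re v)^2 + (Im v)^2)"
  have "v \<noteq> 0" using assms(1) unfolding v_def by simp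
  then have "(Re v)^2 + (Im v)^2 \<noteq> 0" by (simp add: complex_eq_iff)
  moreover have "Im (z - a) * Re v = Re (z - a) * Im v"
    using assms(2) unfolding orient_def v_def by (simp add: algebra_simps)
  ultimately have "z - a = of_real t * v"
    unfolding t_def by (simp add: complex_eq_iff field_simps power2_eq_square) algebra
  then show thesis
    using that[of t] unfolding v_def scaleR_conv_of_real by (simp add: algebra_simps)
qed

lemma S1_notin_open_segment:
  assumes "x \<in> open_segment p q" "p \<in> D2" "q \<in> D2"
  shows "x \<notin> S1"
  using dist_decreases_open_segment[OF assms(1), of 0] assms(2,3) by auto

lemma orient_eq_0_imp_closed_segment:
  assumes "a \<in> S1" "b \<in> S1" "a \<noteq> b" "z \<in> D2" "orient a b z = 0"
  shows "z \<in> closed_segment a b"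
proof -
  obtain t where z: "z = (1 - t) *\<^sub>R a + t *\<^sub>R b" using orient_eq_0_imp_on_line[OF assms(3,5)] .
  have D: "a \<in> D2" "b \<in> D2" using assms(1,2) by auto
  consider "t < 0" | "0 \<le> t \<and> t \<le> 1" | "1 < t" by linarith
  then show ?thesis
  proof cases
    case 1
    define u where "u = - t / (1 - t)"
    have "(1 - u) * (1 - t) = 1" "(1 - u) * t + u = 0" "0 < u" "u < 1"
      using 1 unfolding u_def by (auto simp: field_simps)
    moreover have "(1 - u) *\<^sub>R z + u *\<^sub>R b = ((1 - u) * (1 - t)) *\<^sub>R a + ((1 - u) * t + u) *\<^sub>R b"
      unfolding z by (simp add: scaleR_add_right scaleR_add_left scaleR_scaleR algebra_simps)
    ultimately have "a = (1 - u) *\<^sub>R z + u *\<^sub>R b" "0 < u" "u < 1" by simp_all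
    moreover have "z \<noteq> b" using z assms(3) 1 by (auto simp: algebra_simps)
    ultimately have "a \<in> open_segment z b" unfolding in_segment by blast
    then show ?thesis using S1_notin_open_segment[OF _ assms(4) D(2)] assms(1) by blast
  next
    case 3
    define u where "u = 1 / t"
    have "(1 - u) + u * (1 - t) = 0" "u * t = 1" "0 < u" "u < 1"
      using 3 unfolding u_def by (auto simp: field_simps)
    moreover have "(1 - u) *\<^sub>R a + u *\<^sub>R z = ((1 - u) + u * (1 - t)) *\<^sub>R a + (u * t) *\<^sub>R b"
      unfolding z by (simp add: scaleR_add_right scaleR_add_left scaleR_scaleR algebra_simps)
    ultimately have "b = (1 - u) *\<^sub>R a + u *\<^sub>R z" "0 < u" "u < 1" by simp_all
    moreover have "a \<noteq> z" using z assms(3) 3 by (auto simp: algebra_simps)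
    ultimately have "b \<in> open_segment a z" unfolding in_segment by blast
    then show ?thesis using S1_notin_open_segment[OF _ D(1) assms(4)] assms(2) by blast
  qed (use z in \<open>auto simp: closed_segment_def\<close>)
qed

lemma parallel_chord_through:
  assumes "c \<noteq> d" "q \<in> D2"
  obtains z1 z2 where "z1 \<in> S1" "z2 \<in> S1" "orient c d z1 = orient c d q"
    "orient c d z2 = orient c d q" "q \<in> closed_segment z1 z2"
proof -
  define u where "u = d - c"
  define g where "g s = q + of_real s * u" for s
  define R where "R = 2 / norm u"
  have R: "R > 0" "R * norm u = 2" unfolding R_def u_def using assms(1) by auto
  have g_cont: "continuous_on A (\<lambda>s. norm (g s))" for A unfolding g_def by (intro continuous_intros)
  have g0: "norm (g 0) \<le> 1" unfolding g_def using assms(2) by simp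
  have gR: "norm (g s) \<ge> 1" if "\<bar>s\<bar> = R" for s
  proof -
    have "norm (of_real s * u) = 2" using that R by (simp add: norm_mult)
    then show ?thesis using norm_triangle_ineq2[of "of_real s * u" "- q"] assms(2) unfolding g_def
      by (simp add: add.commute)
  qed
  obtain s1 where s1: "-R \<le> s1" "s1 \<le> 0" "norm (g s1) = 1"
    using IVT2'[of "\<lambda>s. norm (g s)" 0 1 "-R"] g0 gR[of "-R"] R(1) g_cont by auto
  obtain s2 where s2: "0 \<le> s2" "s2 \<le> R" "norm (g s2) = 1"
    using IVT'[of "\<lambda>s. norm (g s)" 0 1 R] g0 gR[of R] R(1) g_cont by auto
  have "orient c d (g s) = orient c d q" for s
  proof -
    have "of_real s * u * cnj u = of_real (s * (norm u)^2)"
      using complex_norm_square[of u] by (simp add: mult.assoc)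
    then show ?thesis unfolding g_def orient_add u_def[symmetric] by simp
  qed
  moreover have "q \<in> closed_segment (g s1) (g s2)"
  proof (cases "s1 = s2")
    case False
    define l where "l = - s1 / (s2 - s1)"
    have "0 \<le> l" "l \<le> 1" "(1 - l) * s1 + l * s2 = 0"
      unfolding l_def using False s1 s2 by (auto simp: field_simps)
    moreover have "(1 - l) *\<^sub>R g s1 + l *\<^sub>R g s2 = q + of_real ((1 - l) * s1 + l * s2) * u"
      unfolding g_def scaleR_conv_of_real by (simp add: algebra_simps)
    ultimately show ?thesis unfolding closed_segment_def by force
  qed (use s1 s2 in \<open>simp add: g_def\<close>)
  ultimately show ?thesis using that[of "g s1" "g s2"] s1 s2 by simp
qed

section \<open>Complementary regions as intersections of half-planes\<close>

lemma Geo_iff: "z \<in> Geo L \<longleftrightarrow> (\<exists>a b. {a, b} \<in> L \<and> z \<in> closed_segment a b)"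
  unfolding Geo_def by auto

lemma prelamination_leaf:
  "prelamination L \<Longrightarrow> {a, b} \<in> L \<Longrightarrow> a \<in> S1 \<and> b \<in> S1 \<and> a \<noteq> b"
  unfolding prelamination_def using leaf_endpoints by blast

lemma prelamination_obtain_leaf:
  assumes "prelamination L" "l \<in> L"
  obtains a b where "l = {a, b}" "a \<in> S1" "b \<in> S1" "a \<noteq> b"
proof -
  have "is_leaf l" using assms unfolding prelamination_def by blast
  then show thesis using that unfolding is_leaf_def by blast
qed

definition separates :: "complex set \<Rightarrow> complex \<Rightarrow> complex \<Rightarrow> bool" where
  "separates l p q \<longleftrightarrow> (\<exists>a b. l = {a, b} \<and> orient a b p * orient a b q < 0)"

lemma separates_pair [simp]: "separates {a, b} p q \<longleftrightarrow> orient a b p * orient a b q < 0"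
proof
  assume "separates {a, b} p q"
  then obtain c d where cd: "{a, b} = {c, d}" "orient c d p * orient c d q < 0"
    unfolding separates_def by blast
  from cd(1) have "(c = a \<and> d = b) \<or> (c = b \<and> d = a)" by (auto simp: doubleton_eq_iff)
  then show "orient a b p * orient a b q < 0"
    using cd(2) orient_swap[of b a p] orient_swap[of b a q] by auto
qed (auto simp: separates_def)

lemma separates_closed_segment:
  assumes "separates l p x" "separates l q x" "z \<in> closed_segment p q"
  shows "separates l z x"
proof -
  obtain a b where l: "l = {a, b}" using assms(1) unfolding separates_def by blast
  obtain u where u: "0 \<le> u" "u \<le> 1" "z = (1 - u) *\<^sub>R p + u *\<^sub>R q"
    using assms(3) unfolding closed_segment_def by blast
  have "orient a b p * orient a b x < 0" "orient a b q * orient a b x < 0" using assms(1,2) l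
    by auto
  then have "(1 - u) * (orient a b p * orient a b x) + u * (orient a b q * orient a b x) < 0"
    using u by (intro convex_bound_lt) auto
  moreover have "orient a b z * orient a b x =
      (1 - u) * (orient a b p * orient a b x) + u * (orient a b q * orient a b x)"
    unfolding u(3) orient_convex_comb by (simp add: algebra_simps)
  ultimately show ?thesis unfolding l by simp
qed

definition side_region :: "complex set set \<Rightarrow> complex \<Rightarrow> complex set" where
  "side_region L x0 = {z \<in> D2. \<forall>a b. {a, b} \<in> L \<longrightarrow> orient a b z * orient a b x0 \<ge> 0}"

lemma side_region_not_separates:
  assumes "z \<in> side_region L x0" "l \<in> L"
  shows "\<not> separates l z x0"
proof
  assume "separates l z x0"
  then obtain a b where "l = {a, b}" "orient a b z * orient a b x0 < 0" unfolding separates_def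
    by blast
  then show False using assms unfolding side_region_def by force
qed

lemma side_region_subset: "side_region L x0 \<subseteq> D2"
  unfolding side_region_def by auto

lemma closed_side_region: "closed (side_region L x0)"
proof -
  let ?H = "\<lambda>ab. {z. 0 \<le> orient (fst ab) (snd ab) z * orient (fst ab) (snd ab) x0}"
  have eq: "side_region L x0 = D2 \<inter> (\<Inter>ab\<in>{(a, b). {a, b} \<in> L}. ?H ab)"
    unfolding side_region_def by auto
  have "closed (?H ab)" for ab
    by (rule closed_Collect_le[OF continuous_on_const continuous_on_mult_right[OF continuous_on_orient]])
  then show ?thesis unfolding eq by (simp add: closed_Int closed_INT)
qed

lemma convex_side_region: "convex (side_region L x0)"
proof (rule convexI)
  fix p q and u v :: real
  assume pq: "p \<in> side_region L x0" "q \<in> side_region L x0" and uv: "0 \<le> u" "0 \<le> v" "u + v = 1"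
  have "p \<in> D2" "q \<in> D2" using pq unfolding side_region_def by auto
  then have "u *\<^sub>R p + v *\<^sub>R q \<in> D2" using uv by (intro convexD[OF convex_cball])
  moreover have "0 \<le> orient a b (u *\<^sub>R p + v *\<^sub>R q) * orient a b x0" if "{a, b} \<in> L" for a b
  proof -
    have "orient a b (u *\<^sub>R p + v *\<^sub>R q) = u * orient a b p + v * orient a b q"
      using orient_convex_comb[of a b v p q] uv by (simp add: eq_diff_eq[symmetric])
    then show ?thesis using pq that uv unfolding side_region_def by (simp add: algebra_simps)
  qed
  ultimately show "u *\<^sub>R p + v *\<^sub>R q \<in> side_region L x0" by (simp add: side_region_def)
qed

lemma convex_comb_pos: "0 \<le> u \<Longrightarrow> u \<le> 1 \<Longrightarrow> 0 < x \<Longrightarrow> 0 < y \<Longrightarrow> 0 < (1 - u) * x + u * (y::real)"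
  using convex_bound_lt[of "- x" 0 "- y" "1 - u" u] by simp

lemma orient_nonzero_off_Geo:
  assumes "prelamination L" "x \<in> D2 - Geo L" "{a, b} \<in> L"
  shows "orient a b x \<noteq> 0"
proof
  assume "orient a b x = 0"
  then have "x \<in> closed_segment a b"
    using orient_eq_0_imp_closed_segment prelamination_leaf[OF assms(1,3)] assms(2) by blast
  then show False using assms(2,3) Geo_iff by blast
qed

lemma component_orient_same_sign:
  assumes "prelamination L" "z \<in> connected_component_set (D2 - Geo L) x0" "{a, b} \<in> L"
  shows "orient a b z * orient a b x0 > 0"
proof -
  define K where "K = connected_component_set (D2 - Geo L) x0"
  have "x0 \<in> D2 - Geo L" using assms(2) connected_component_in by fastforce
  then have K: "K \<subseteq> D2 - Geo L" "connected K" "x0 \<in> K"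
    unfolding K_def by (simp_all add: connected_component_subset)
  then have "\<forall>w\<in>K. orient a b w \<noteq> 0" using orient_nonzero_off_Geo[OF assms(1) _ assms(3)] by blast
  moreover have "z \<in> K" using assms(2) unfolding K_def .
  ultimately have "orient a b x0 * orient a b z > 0"
    using connected_nonvanishing_same_sign[OF K(2) continuous_on_orient _ K(3)] by blast
  then show ?thesis by (simp add: mult.commute)
qed

lemma same_sign_imp_component:
  assumes "prelamination L" "x0 \<in> D2 - Geo L" "z \<in> D2"
    and same: "\<And>a b. {a, b} \<in> L \<Longrightarrow> orient a b z * orient a b x0 > 0"
  shows "z \<in> connected_component_set (D2 - Geo L) x0"
proof -
  have "y \<notin> Geo L" if y: "y \<in> closed_segment x0 z" for y
  proof
    assume "y \<in> Geo L"
    then obtain a b where ab: "{a, b} \<in> L" "y \<in> closed_segment a b" using Geo_iff by blast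
    obtain u where u: "0 \<le> u" "u \<le> 1" "y = (1 - u) *\<^sub>R x0 + u *\<^sub>R z"
      using y unfolding closed_segment_def by blast
    have "orient a b y * orient a b x0 =
        (1 - u) * (orient a b x0)^2 + u * (orient a b z * orient a b x0)"
      unfolding u(3) orient_convex_comb by (simp add: algebra_simps power2_eq_square)
    moreover have "(orient a b x0)^2 > 0" using orient_nonzero_off_Geo[OF assms(1,2) ab(1)] by simp
    ultimately have "orient a b y * orient a b x0 > 0"
      using u same[OF ab(1)] convex_comb_pos by simp
    then show False using orient_closed_segment[OF ab(2)] by simp
  qed
  moreover have "closed_segment x0 z \<subseteq> D2"
    using assms(2,3) convex_cball[of 0 1] by (simp add: closed_segment_subset)
  ultimately have "closed_segment x0 z \<subseteq> D2 - Geo L" by blast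
  then show ?thesis
    using connected_componentI[OF connected_segment _ ends_in_segment(1) ends_in_segment(2)] by simp
qed

lemma closure_component_eq_side_region:
  assumes "prelamination L" "x0 \<in> D2 - Geo L"
  shows "closure (connected_component_set (D2 - Geo L) x0) = side_region L x0"
proof
  let ?K = "connected_component_set (D2 - Geo L) x0"
  have "?K \<subseteq> side_region L x0"
  proof
    fix z assume z: "z \<in> ?K"
    then have "z \<in> D2" using connected_component_subset by blast
    moreover have "orient a b z * orient a b x0 \<ge> 0" if "{a, b} \<in> L" for a b
      using component_orient_same_sign[OF assms(1) z that] by simp
    ultimately show "z \<in> side_region L x0" unfolding side_region_def by blast
  qed
  then show "closure ?K \<subseteq> side_region L x0"
    using closed_side_region closure_minimal by blast
  show "side_region L x0 \<subseteq> closure ?K"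
  proof
    fix p assume p: "p \<in> side_region L x0"
    have "open_segment x0 p \<subseteq> ?K"
    proof
      fix y assume "y \<in> open_segment x0 p"
      then obtain u where u: "0 < u" "u < 1" "y = (1 - u) *\<^sub>R x0 + u *\<^sub>R p"
        by (auto simp: in_segment)
      have "x0 \<in> side_region L x0" using assms unfolding side_region_def by auto
      then have "y \<in> side_region L x0"
        using p convex_side_region u unfolding convex_alt by simp
      then have "y \<in> D2" using side_region_subset by blast
      moreover have "orient a b y * orient a b x0 > 0" if "{a, b} \<in> L" for a b
      proof -
        have "orient a b y * orient a b x0 =
            (1 - u) * (orient a b x0)^2 + u * (orient a b p * orient a b x0)"
          unfolding u(3) orient_convex_comb by (simp add: algebra_simps power2_eq_square)
        moreover have "(orient a b x0)^2 > 0" using orient_nonzero_off_Geo[OF assms that] by simp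
        moreover have "orient a b p * orient a b x0 \<ge> 0" using p that unfolding side_region_def
          by blast
        ultimately show ?thesis using u by (simp add: add_pos_nonneg)
      qed
      ultimately show "y \<in> ?K" using same_sign_imp_component[OF assms] by blast
    qed
    then have "closure (open_segment x0 p) \<subseteq> closure ?K" by (rule closure_mono)
    then show "p \<in> closure ?K"
      using assms(2) closure_subset[of ?K] by (cases "p = x0") auto
  qed
qed

lemma nontrivial_region_side_region:
  assumes "nontrivial_region L C" "prelamination L"
  obtains x0 where "x0 \<in> D2 - Geo L" "C = side_region L x0"
    "\<not> (\<exists>a b. a \<noteq> b \<and> a \<in> S1 \<and> b \<in> S1 \<and> C = closed_segment a b)"
proof -
  obtain x0 where x0: "x0 \<in> D2 - Geo L" "C = closure (connected_component_set (D2 - Geo L) x0)"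
    using assms(1) unfolding nontrivial_region_def compl_region_def by blast
  then have "C = side_region L x0" using closure_component_eq_side_region[OF assms(2)] by simp
  then show thesis using that x0(1) assms(1) unfolding nontrivial_region_def by blast
qed

section \<open>Sides of closed convex regions\<close>

text \<open>\<open>{a, b}\<close> is a side of \<open>C\<close>, named in the orientation that puts \<open>C\<close> on its left.\<close>

definition oriented_side :: "complex set \<Rightarrow> complex \<Rightarrow> complex \<Rightarrow> bool" where
  "oriented_side C a b \<longleftrightarrow> a \<in> S1 \<and> b \<in> S1 \<and> a \<noteq> b \<and> closed_segment a b \<subseteq> C \<and>
     (\<forall>c\<in>C. orient a b c \<ge> 0) \<and> (\<exists>c\<in>C. orient a b c > 0)"

lemma oriented_side_swap:
  assumes "oriented_side C a b"
  shows "\<not> oriented_side C b a"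
proof
  obtain c where "c \<in> C" "orient a b c > 0" using assms unfolding oriented_side_def by blast
  moreover assume "oriented_side C b a"
  ultimately have "orient b a c \<ge> 0" "orient b a c = - orient a b c"
    unfolding oriented_side_def by (auto simp: orient_swap[of b a c])
  then show False using \<open>orient a b c > 0\<close> by linarith
qed

lemma oriented_side_eq:
  "oriented_side C a b \<Longrightarrow> oriented_side C c d \<Longrightarrow> {a, b} = {c, d} \<Longrightarrow> a = c \<and> b = d"
  using oriented_side_swap by (auto simp: doubleton_eq_iff)

lemma oriented_sides_mutual:
  assumes "oriented_side C a b" "oriented_side C c d"
  shows "orient a b c \<ge> 0" "orient a b d \<ge> 0" "orient c d a \<ge> 0" "orient c d b \<ge> 0"
proof -
  have "a \<in> C" "b \<in> C" "c \<in> C" "d \<in> C" using assms unfolding oriented_side_def by auto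
  moreover have "\<forall>x\<in>C. orient a b x \<ge> 0" "\<forall>x\<in>C. orient c d x \<ge> 0"
    using assms unfolding oriented_side_def by auto
  ultimately show "orient a b c \<ge> 0" "orient a b d \<ge> 0" "orient c d a \<ge> 0" "orient c d b \<ge> 0"
    by blast+
qed

lemma halfplane_boundary_not_interior:
  assumes "a \<noteq> b" "\<forall>c\<in>C. orient a b c \<ge> 0" "orient a b y = 0"
  shows "y \<notin> interior C"
proof
  assume "y \<in> interior C"
  then obtain e where e: "e > 0" "ball y e \<subseteq> C" using mem_interior by blast
  define k where "k = e / (2 * norm (b - a))"
  define d where "d = - (\<i> * of_real k) * (b - a)"
  have k: "k > 0" using e assms(1) unfolding k_def by simp
  have "norm d = k * norm (b - a)" unfolding d_def using k by (simp add: norm_mult)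
  also have "\<dots> = e / 2" unfolding k_def using assms(1) by simp
  finally have "y + d \<in> C" using e by (auto simp: dist_norm)
  then have "orient a b (y + d) \<ge> 0" using assms(2) by blast
  moreover have "d * cnj (b - a) = - (\<i> * of_real k) * of_real ((norm (b - a))^2)"
    unfolding d_def complex_norm_square by (simp add: mult.assoc)
  then have "orient a b (y + d) = - k * (norm (b - a))^2"
    unfolding orient_add assms(3) by simp
  moreover have "k * (norm (b - a))^2 > 0" using k assms(1) by simp
  ultimately show False by linarith
qed

lemma oriented_side_geodesic_side:
  assumes "closed C" "oriented_side C a b"
  shows "geodesic_side C {a, b}"
proof -
  have side: "a \<in> S1" "b \<in> S1" "a \<noteq> b" "closed_segment a b \<subseteq> C" "\<forall>c\<in>C. orient a b c \<ge> 0"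
    using assms(2) unfolding oriented_side_def by auto
  have "y \<in> frontier C" if "y \<in> closed_segment a b" for y
    using that side closure_subset halfplane_boundary_not_interior[OF side(3,5) orient_closed_segment]
    unfolding frontier_def by blast
  then show ?thesis unfolding geodesic_side_def using side by blast
qed

lemma norm_midpoint_S1_less_1:
  assumes "a \<in> S1" "b \<in> S1" "a \<noteq> b"
  shows "norm (midpoint a b) < 1"
  using dist_decreases_open_segment[of "midpoint a b" a b 0] assms by simp

text \<open>Near the midpoint of a chord contained in the convex set \<open>C\<close>, every point \<open>q\<close> on the side of a
  point \<open>p \<in> C\<close> is a convex combination of \<open>p\<close> and the point \<open>y q\<close> where the line through \<open>p\<close>
  and \<open>q\<close> meets the chord.\<close>

lemma convex_eventually_near_chord:
  assumes "convex C" "a \<in> S1" "b \<in> S1" "a \<noteq> b" "closed_segment a b \<subseteq> C" "p \<in> C"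
    "orient a b p \<noteq> 0"
  shows "eventually (\<lambda>q. 0 \<le> orient a b q * orient a b p \<longrightarrow> q \<in> C) (nhds (midpoint a b))"
proof -
  define m where "m = midpoint a b"
  define l where "l q = orient a b q / orient a b p" for q
  define u where "u q = - l q / (1 - l q)" for q
  define y where "y q = (1 - u q) *\<^sub>R q + u q *\<^sub>R p" for q
  define S where "S = {q. l q < 1}"
  have l_cont: "continuous_on A l" for A
    unfolding l_def using assms(7) by (intro continuous_intros) auto
  have "open S" unfolding S_def using l_cont by (intro open_Collect_less continuous_intros)
  moreover have "continuous_on S y"
    unfolding y_def u_def S_def using l_cont by (intro continuous_intros) auto
  ultimately have U: "open (S \<inter> y -` ball 0 1)" by (intro continuous_open_preimage) auto
  moreover have "l m = 0" "y m = m"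
    unfolding m_def y_def u_def l_def using orient_closed_segment[OF midpoint_in_closed_segment]
      by simp_all
  then have mU: "m \<in> S \<inter> y -` ball 0 1" unfolding S_def m_def
    using norm_midpoint_S1_less_1 assms(2-4) by simp
  have "q \<in> C" if q: "q \<in> S \<inter> y -` ball 0 1" "0 \<le> orient a b q * orient a b p" for q
  proof -
    have l: "0 \<le> l q" "l q < 1" using q assms(7) unfolding S_def l_def
      by (auto simp: zero_le_divide_iff zero_le_mult_iff)
    have ul: "u q * (1 - l q) = - l q" using l unfolding u_def by simp
    have "orient a b q = l q * orient a b p" using assms(7) unfolding l_def by simp
    then have "orient a b (y q) = orient a b p * (l q + u q * (1 - l q))"
      unfolding y_def orient_convex_comb by (simp add: algebra_simps)
    then have "y q \<in> closed_segment a b"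
      using q(1) assms(2-4) ul by (intro orient_eq_0_imp_closed_segment) auto
    then have yC: "y q \<in> C" using assms(5) by blast
    have coeffs: "(1 - l q) * (1 - u q) = 1" "(1 - l q) * u q + l q = 0"
      using ul by (simp_all add: algebra_simps)
    have "(1 - l q) *\<^sub>R y q + l q *\<^sub>R p =
        ((1 - l q) * (1 - u q)) *\<^sub>R q + ((1 - l q) * u q + l q) *\<^sub>R p"
      unfolding y_def by (simp add: scaleR_add_right scaleR_diff_left algebra_simps)
    then have "q = (1 - l q) *\<^sub>R y q + l q *\<^sub>R p" unfolding coeffs by simp
    then show "q \<in> C" using convexD[OF assms(1) yC assms(6), of "1 - l q" "l q"] l by simp
  qed
  then show ?thesis unfolding eventually_nhds m_def[symmetric] using U mU by blast
qed

lemma convex_chord_both_sides_interior: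
  assumes "convex C" "a \<in> S1" "b \<in> S1" "a \<noteq> b" "closed_segment a b \<subseteq> C"
    "c \<in> C" "orient a b c > 0" "z \<in> C" "orient a b z < 0"
  shows "midpoint a b \<in> interior C"
proof -
  have near: "eventually (\<lambda>q. (0 \<le> orient a b q * orient a b c \<longrightarrow> q \<in> C) \<and>
      (0 \<le> orient a b q * orient a b z \<longrightarrow> q \<in> C)) (nhds (midpoint a b))"
    using assms by (intro eventually_conj convex_eventually_near_chord) auto
  have side: "0 \<le> orient a b q * orient a b c \<or> 0 \<le> orient a b q * orient a b z" for q
    using assms(7,9)
      by (cases "orient a b q \<ge> 0") (auto intro: mult_nonneg_nonneg mult_nonpos_nonpos)
  have "eventually (\<lambda>q. q \<in> C) (nhds (midpoint a b))"
    using near by (rule eventually_mono) (use side in blast)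
  then show ?thesis unfolding eventually_nhds by (blast intro: interiorI)
qed

lemma geodesic_side_imp_oriented_side:
  assumes "closed C" "convex C" "C \<subseteq> D2"
    and not_chord: "\<not> (\<exists>a b. a \<noteq> b \<and> a \<in> S1 \<and> b \<in> S1 \<and> C = closed_segment a b)"
    and "geodesic_side C s"
  obtains a b where "s = {a, b}" "oriented_side C a b"
proof -
  obtain a b where ab: "a \<noteq> b" "a \<in> S1" "b \<in> S1" "s = {a, b}" "closed_segment a b \<subseteq> frontier C"
    using assms(5) unfolding geodesic_side_def by blast
  have seg: "closed_segment a b \<subseteq> C" using ab(5) frontier_subset_closed[OF assms(1)] by blast
  have "\<not> C \<subseteq> closed_segment a b" using seg not_chord ab(1-3) by blast
  then obtain c where c: "c \<in> C" "orient a b c \<noteq> 0"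
    using orient_eq_0_imp_closed_segment[OF ab(2,3,1)] assms(3) by blast
  have one_side: "0 \<le> orient a b z * orient a b c" if "z \<in> C" for z
  proof (rule ccontr)
    assume "\<not> 0 \<le> orient a b z * orient a b c"
    then have "midpoint a b \<in> interior C"
      using convex_chord_both_sides_interior[OF assms(2) ab(2,3,1) seg] c that
      by (cases "orient a b c > 0") (auto simp: mult_less_0_iff not_le)
    moreover have "midpoint a b \<in> frontier C" using ab(5) by auto
    ultimately show False unfolding frontier_def by blast
  qed
  show thesis
  proof (cases "orient a b c > 0")
    case True
    then have "oriented_side C a b"
      unfolding oriented_side_def using ab seg c one_side by (auto simp: zero_le_mult_iff)
    then show thesis using that ab(4) by blast
  next
    case False
    then have "orient b a c > 0" using c(2) orient_swap[of b a c] by simp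
    moreover have "orient b a z \<ge> 0" if "z \<in> C" for z
      using one_side[OF that] False c(2) orient_swap[of b a z] by (auto simp: zero_le_mult_iff)
    ultimately have "oriented_side C b a"
      unfolding oriented_side_def using ab seg c by (auto simp: closed_segment_commute)
    then show thesis using that[of b a] ab(4) by (simp add: insert_commute)
  qed
qed

section \<open>Leaves in the caps of sides\<close>

lemma sign_transfer:
  fixes x y z :: real
  assumes "x * z \<ge> 0" "y * z \<ge> 0" "z \<noteq> 0"
  shows "x * y \<ge> 0"
proof -
  have "(x * y) * z^2 = (x * z) * (y * z)" by (simp add: power2_eq_square algebra_simps)
  then have "(x * y) * z^2 \<ge> 0" by (simp only: mult_nonneg_nonneg[OF assms(1,2)])
  then show ?thesis using assms(3) by (simp add: zero_le_mult_iff)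
qed

lemma S1_orient_negative_exists:
  assumes "a \<in> S1" "b \<in> S1" "a \<noteq> b"
  obtains p where "p \<in> S1" "orient a b p < 0"
proof -
  define t where "t = angle_from a b"
  have "t \<noteq> pi" using assms angle_from_self angle_from_inj[of a b a] unfolding t_def by auto
  then have t: "t \<in> {-pi<..<pi}" using angle_from_in_range[of a b] unfolding t_def by auto
  then have "sgn (orient a (circ a t) (circ a ((t - pi) / 2))) = sgn ((t - pi) / 2 - t)"
    by (intro sgn_orient_from_base[OF assms(1)]) auto
  moreover have "(t - pi) / 2 - t < 0" using t by simp
  ultimately have "sgn (orient a (circ a t) (circ a ((t - pi) / 2))) < 0" by simp
  moreover have "circ a t = b" using assms unfolding t_def by simp
  ultimately have "orient a b (circ a ((t - pi) / 2)) < 0" by simp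
  then show thesis using that[of "circ a ((t - pi) / 2)"] assms(1) by simp
qed

lemma side_region_orient:
  "z \<in> side_region L x0 \<Longrightarrow> {a, b} \<in> L \<Longrightarrow> orient a b z * orient a b x0 \<ge> 0"
  unfolding side_region_def by blast

lemma leaf_same_side_of_oriented_side:
  assumes "prelamination L" "x0 \<in> D2 - Geo L" "oriented_side (side_region L x0) a b" "{w1, w2} \<in> L"
  shows "orient a b w1 * orient a b w2 \<ge> 0"
proof -
  have w: "w1 \<in> S1" "w2 \<in> S1" "w1 \<noteq> w2" using prelamination_leaf[OF assms(1,4)] by auto
  have ab: "a \<in> S1" "b \<in> S1" "a \<noteq> b" "a \<in> side_region L x0" "b \<in> side_region L x0"
    using assms(3) unfolding oriented_side_def by auto
  have "orient w1 w2 a * orient w1 w2 x0 \<ge> 0" "orient w1 w2 b * orient w1 w2 x0 \<ge> 0"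
    using side_region_orient[OF _ assms(4)] ab(4,5) by auto
  then have "orient w1 w2 a * orient w1 w2 b \<ge> 0"
    using sign_transfer orient_nonzero_off_Geo[OF assms(1,2,4)] by blast
  then show ?thesis using orient_cross_sym[OF ab(1,2) w(1,2) ab(3) w(3)] by linarith
qed

lemma leaf_cap_interval:
  assumes "prelamination L" "x0 \<in> D2 - Geo L" "a0 \<in> S1" "a0 \<in> side_region L x0" "w \<in> L"
  shows "\<exists>u v. -pi \<le> u \<and> u < v \<and> v \<le> pi \<and> w = {circ a0 u, circ a0 v} \<and>
    (\<forall>r\<in>{-pi<..pi}. separates w (circ a0 r) x0 \<longleftrightarrow> u < r \<and> r < v)"
proof -
  obtain w1 w2 where w: "w = {w1, w2}" "w1 \<in> S1" "w2 \<in> S1"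
    and ordered: "angle_from a0 w1 < angle_from a0 w2"
  proof -
    obtain p q where pq: "w = {p, q}" "p \<in> S1" "q \<in> S1" "p \<noteq> q"
      using prelamination_obtain_leaf[OF assms(1,5)] .
    then have "angle_from a0 p < angle_from a0 q \<or> angle_from a0 q < angle_from a0 p"
      using angle_from_inj[OF assms(3)] by (meson linorder_neqE_linordered_idom)
    then show thesis using that[of p q] that[of q p] pq by (auto simp: insert_commute)
  qed
  define s where "s = angle_from a0 w1"
  define t where "t = angle_from a0 w2"
  have range: "s \<in> {-pi<..pi}" "t \<in> {-pi<..pi}"
    using angle_from_in_range[of a0 w1] angle_from_in_range[of a0 w2] unfolding s_def t_def by auto
  have w12: "w1 = circ a0 s" "w2 = circ a0 t" using w assms(3) unfolding s_def t_def by simp_all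
  have st: "s < t" using ordered unfolding s_def t_def .
  have neg: "orient w1 w2 (circ a0 r) < 0 \<longleftrightarrow> s < r \<and> r < t" if "r \<in> {-pi<..pi}" for r
    using orient_circ_less_0_iff[OF assms(3) range that] st unfolding w12 ccw_between_def by auto
  have pos: "orient w1 w2 (circ a0 r) > 0 \<longleftrightarrow> r < s \<or> t < r" if "r \<in> {-pi<..pi}" for r
    using orient_circ_greater_0_iff[OF assms(3) range that] st unfolding w12 ccw_between_def by auto
  have x0: "orient w1 w2 x0 \<noteq> 0" using orient_nonzero_off_Geo[OF assms(1,2)] w assms(5) by simp
  have a0: "orient w1 w2 a0 * orient w1 w2 x0 \<ge> 0" using side_region_orient assms(4,5) w by auto
  show ?thesis
  proof (cases "orient w1 w2 x0 > 0")
    case True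
    then have "separates w (circ a0 r) x0 \<longleftrightarrow> s < r \<and> r < t" if "r \<in> {-pi<..pi}" for r
      using neg[OF that] w by (simp add: mult_less_0_iff)
    then show ?thesis using range st w w12 by (intro exI[of _ s] exI[of _ t]) auto
  next
    text \<open>The point \<open>a0 = circ a0 pi\<close> is not cut off from \<open>x0\<close>, so the arc beyond \<open>w\<close> can be
      the complement of \<open>{s<..<t}\<close> only if \<open>w\<close> ends at \<open>a0\<close>.\<close>
    case False
    then have x0_neg: "orient w1 w2 x0 < 0" using x0 by simp
    have "\<not> orient w1 w2 (circ a0 pi) > 0"
      using a0 x0_neg assms(3) mult_pos_neg[of "orient w1 w2 a0" "orient w1 w2 x0"] by auto
    then have t: "t = pi" using pos[of pi] range by auto
    have "separates w (circ a0 r) x0 \<longleftrightarrow> -pi < r \<and> r < s" if "r \<in> {-pi<..pi}" for r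
      using pos[OF that] that w x0_neg t by (auto simp: mult_less_0_iff)
    moreover have "w = {circ a0 (-pi), circ a0 s}" using w w12 t assms(3) by auto
    ultimately show ?thesis using range by (intro exI[of _ "-pi"] exI[of _ s]) auto
  qed
qed

lemma circ_params_cross:
  assumes "a0 \<in> S1" "u < u'" "u' < v" "v < v'" "v' - u < 2 * pi"
  shows "crosses {circ a0 u', circ a0 v'} {circ a0 u, circ a0 v}"
proof -
  have sin_pos: "sin (x / 2) > 0" if "0 < x" "x < 2 * pi" for x
    using that by (intro sin_gt_zero) auto
  have "sin ((u' - u) / 2) > 0" "sin ((v - u) / 2) > 0"
    "sin ((v' - u) / 2) > 0" "sin ((v' - v) / 2) > 0"
    using assms by (auto intro!: sin_pos)
  moreover have "sin ((u' - v) / 2) = - sin ((v - u') / 2)"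
    by (metis minus_diff_eq minus_divide_left sin_minus)
  then have "sin ((u' - v) / 2) < 0" using sin_pos[of "v - u'"] assms by simp
  ultimately have
    "orient (circ a0 u) (circ a0 v) (circ a0 u') < 0" "orient (circ a0 u) (circ a0 v) (circ a0 v') > 0"
    unfolding orient_circ[OF assms(1)] by (simp_all add: mult_pos_neg)
  moreover from this have "circ a0 u' \<noteq> circ a0 v'" "circ a0 u \<noteq> circ a0 v" by auto
  ultimately show ?thesis using assms(1) by (subst crosses_iff_orient) (auto simp: mult_neg_pos)
qed

lemma nested_intervals_cover:
  fixes lo hi :: "'w \<Rightarrow> real"
  assumes cover: "\<And>t. t \<in> {t1..t2} \<Longrightarrow> \<exists>w\<in>W. lo w < t \<and> t < hi w"
    and nested: "\<And>w w' t. w \<in> W \<Longrightarrow> w' \<in> W \<Longrightarrow> lo w < t \<Longrightarrow> t < hi w \<Longrightarrow> lo w' < t \<Longrightarrow> t < hi w' \<Longrightarrow>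
        (lo w \<le> lo w' \<and> hi w' \<le> hi w) \<or> (lo w' \<le> lo w \<and> hi w \<le> hi w')"
    and "t1 \<le> t2"
  shows "\<exists>w\<in>W. lo w < t1 \<and> t2 < hi w"
proof -
  define M where "M = {s \<in> {t1..t2}. \<exists>w\<in>W. lo w < t1 \<and> s < hi w}"
  define m where "m = Sup M"
  have "t1 \<in> M" using cover[of t1] assms(3) unfolding M_def by auto
  moreover have bdd: "bdd_above M" unfolding M_def by (auto intro: bdd_aboveI[of _ t2])
  ultimately have M: "M \<noteq> {}" "t1 \<le> m" "m \<le> t2" and upper: "\<And>x. x \<in> M \<Longrightarrow> x \<le> m"
    unfolding m_def by (auto intro: cSup_upper cSup_least simp: M_def)
  then obtain w where w: "w \<in> W" "lo w < m" "m < hi w" using cover by force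
  then obtain x where x: "x \<in> M" "lo w < x" using less_cSup_iff[OF M(1) bdd] unfolding m_def
    by blast
  then obtain w' where w': "w' \<in> W" "lo w' < t1" "x < hi w'" "t1 \<le> x" unfolding M_def by auto
  have "(lo w \<le> lo w' \<and> hi w' \<le> hi w) \<or> (lo w' \<le> lo w \<and> hi w \<le> hi w')"
    using nested[OF w(1) w'(1), of x] upper[OF x(1)] w w' x by linarith
  then obtain w'' where w'': "w'' \<in> W" "lo w'' < t1" "m < hi w''"
    using w w' upper[OF x(1)] by (metis order.strict_trans1 order.strict_trans2)
  show ?thesis
  proof (cases "m < t2")
    case True
    define s' where "s' = min t2 ((m + hi w'') / 2)"
    have "s' < hi w''" "m < s'" "s' \<le> t2" unfolding s'_def using w'' True by (auto simp: min_def)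
    then have "s' \<in> M" unfolding M_def using w'' M(2) by auto
    then have "s' \<le> m" by (rule upper)
    then show ?thesis using \<open>m < s'\<close> by simp
  qed (use w'' M(3) in auto)
qed

lemma orient_circ_arc:
  assumes "a0 \<in> S1" "-pi \<le> d1" "d1 < d2" "d2 \<le> pi" "d2 - d1 < 2 * pi" "-pi \<le> r" "r \<le> pi"
  shows "orient (circ a0 d1) (circ a0 d2) (circ a0 r) < 0 \<longleftrightarrow> d1 < r \<and> r < d2"
    and "d1 \<le> r \<Longrightarrow> r \<le> d2 \<Longrightarrow> orient (circ a0 d1) (circ a0 d2) (circ a0 r) \<le> 0"
proof -
  have half: "sin ((d2 - d1) / 2) > 0" using assms by (intro sin_gt_zero) auto
  have le0: "sin (x / 2) \<le> 0" if "-2 * pi \<le> x" "x \<le> 0" for x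
    using sin_ge_zero[of "- x / 2"] that by simp
  have ge0: "sin (x / 2) \<ge> 0" if "0 \<le> x" "x \<le> 2 * pi" for x
    using sin_ge_zero[of "x / 2"] that by simp
  have lt0: "sin (x / 2) < 0" if "-2 * pi < x" "x < 0" for x
    using sin_gt_zero[of "- x / 2"] that by simp
  have gt0: "sin (x / 2) > 0" if "0 < x" "x < 2 * pi" for x
    using sin_gt_zero[of "x / 2"] that by simp
  note formula = orient_circ[OF assms(1), of d1 d2 r]
  show "d1 \<le> r \<Longrightarrow> r \<le> d2 \<Longrightarrow> orient (circ a0 d1) (circ a0 d2) (circ a0 r) \<le> 0"
    unfolding formula using half ge0[of "r - d1"] le0[of "r - d2"] assms
    by (simp add: mult_nonneg_nonpos mult_nonneg_nonneg)
  have "orient (circ a0 d1) (circ a0 d2) (circ a0 r) < 0" if "d1 < r" "r < d2"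
    unfolding formula using half gt0[of "r - d1"] lt0[of "r - d2"] assms that
    by (simp add: mult_pos_neg)
  moreover have "orient (circ a0 d1) (circ a0 d2) (circ a0 r) \<ge> 0" if "r \<le> d1 \<or> d2 \<le> r"
    using that
  proof
    assume "r \<le> d1"
    then show ?thesis unfolding formula using half le0[of "r - d1"] le0[of "r - d2"] assms
      by (simp add: mult_nonpos_nonpos)
  next
    assume "d2 \<le> r"
    then show ?thesis unfolding formula using half ge0[of "r - d1"] ge0[of "r - d2"] assms
      by (simp add: mult_nonneg_nonneg)
  qed
  ultimately show "orient (circ a0 d1) (circ a0 d2) (circ a0 r) < 0 \<longleftrightarrow> d1 < r \<and> r < d2"
    by (meson leI not_le)
qed

text \<open>Seen from the point \<open>a0\<close> of the region \<open>side_region L x0\<close>, each leaf \<open>w\<close> cuts off from \<open>x0\<close>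
  the points of the circle with parameter in \<open>{lo w<..<hi w}\<close>; \<open>tb\<close> is the parameter of a
  further point of the region on the circle.\<close>

locale leaf_arcs =
  fixes L :: "complex set set" and x0 a0 :: complex and lo hi :: "complex set \<Rightarrow> real" and tb :: real
  assumes prelamination: "prelamination L"
    and x0: "x0 \<in> D2 - Geo L"
    and a0: "a0 \<in> S1"
    and arc_range: "\<And>w. w \<in> L \<Longrightarrow> -pi \<le> lo w \<and> lo w < hi w \<and> hi w \<le> pi"
    and arc_ends: "\<And>w. w \<in> L \<Longrightarrow> w = {circ a0 (lo w), circ a0 (hi w)}"
    and separates_iff:
      "\<And>w r. w \<in> L \<Longrightarrow> r \<in> {-pi<..pi} \<Longrightarrow> separates w (circ a0 r) x0 \<longleftrightarrow> lo w < r \<and> r < hi w"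
    and tb: "tb \<in> {-pi<..<pi}" "\<And>w. w \<in> L \<Longrightarrow> \<not> (lo w < tb \<and> tb < hi w)"
begin

lemma circ_in_side_region_iff:
  assumes "r \<in> {-pi<..pi}"
  shows "circ a0 r \<in> side_region L x0 \<longleftrightarrow> (\<forall>w\<in>L. \<not> (lo w < r \<and> r < hi w))"
proof
  assume "circ a0 r \<in> side_region L x0"
  then show "\<forall>w\<in>L. \<not> (lo w < r \<and> r < hi w)"
    using side_region_not_separates separates_iff assms by blast
next
  assume none: "\<forall>w\<in>L. \<not> (lo w < r \<and> r < hi w)"
  have "orient a b (circ a0 r) * orient a b x0 \<ge> 0" if "{a, b} \<in> L" for a b
    using none separates_iff[OF that assms] that by (auto simp: not_less)
  then show "circ a0 r \<in> side_region L x0" unfolding side_region_def using a0 by simp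
qed

lemma arcs_nested:
  assumes "w \<in> L" "w' \<in> L" "lo w < r" "r < hi w" "lo w' < r" "r < hi w'"
  shows "(lo w \<le> lo w' \<and> hi w' \<le> hi w) \<or> (lo w' \<le> lo w \<and> hi w \<le> hi w')"
proof -
  have not_interleaved: False
    if "w \<in> L" "w' \<in> L" "lo w < lo w'" "lo w' < hi w" "hi w < hi w'" for w w'
  proof (cases "hi w' - lo w < 2 * pi")
    case True
    then have "crosses w' w"
      using circ_params_cross[OF a0 that(3-5)] arc_ends[OF that(1)] arc_ends[OF that(2)] by metis
    then show False using prelamination that(1,2) unfolding prelamination_def by blast
  next
    case False
    then have "lo w = -pi" "hi w' = pi" using arc_range[OF that(1)] arc_range[OF that(2)] by auto
    then show False using tb that by (metis greaterThanLessThan_iff not_le order.strict_trans1)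
  qed
  show ?thesis
    using not_interleaved[OF assms(1,2)] not_interleaved[OF assms(2,1)] assms(3-6) by fastforce
qed

lemma gap_halfplane:
  assumes "-pi \<le> d1" "d1 < d2" "d2 \<le> pi" "d2 - d1 < 2 * pi"
    and gap: "\<And>t. d1 < t \<Longrightarrow> t < d2 \<Longrightarrow> circ a0 t \<notin> side_region L x0"
    and q: "q \<in> side_region L x0"
  shows "orient (circ a0 d1) (circ a0 d2) q \<ge> 0"
proof (rule ccontr)
  let ?c = "circ a0 d1" and ?d = "circ a0 d2"
  assume "\<not> ?thesis"
  then have neg: "orient ?c ?d q < 0" by simp
  then have "?c \<noteq> ?d" by auto
  moreover have "q \<in> D2" using q side_region_subset by blast
  ultimately obtain z1 z2 where z: "z1 \<in> S1" "z2 \<in> S1" "orient ?c ?d z1 = orient ?c ?d q"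
      "orient ?c ?d z2 = orient ?c ?d q" "q \<in> closed_segment z1 z2"
    by (rule parallel_chord_through)
  define s1 where "s1 = min (angle_from a0 z1) (angle_from a0 z2)"
  define s2 where "s2 = max (angle_from a0 z1) (angle_from a0 z2)"
  have in_gap: "d1 < angle_from a0 z \<and> angle_from a0 z < d2" if "z \<in> {z1, z2}" for z
  proof -
    have "angle_from a0 z \<in> {-pi<..pi}" by (rule angle_from_in_range)
    moreover have "orient ?c ?d (circ a0 (angle_from a0 z)) < 0" using that z neg a0 by auto
    ultimately show ?thesis using orient_circ_arc(1)[OF a0 assms(1-4)] by auto
  qed
  have s: "d1 < s1" "s1 \<le> s2" "s2 < d2" "s1 \<in> {-pi<..pi}" "s2 \<in> {-pi<..pi}"
    using in_gap[of z1] in_gap[of z2] assms(1,3) unfolding s1_def s2_def by auto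
  have qseg: "q \<in> closed_segment (circ a0 s1) (circ a0 s2)"
    using z(5) z(1,2) a0 unfolding s1_def s2_def
    by (cases "angle_from a0 z1 \<le> angle_from a0 z2") (auto simp: closed_segment_commute min_def max_def)
  have cover: "\<exists>w\<in>L. lo w < t \<and> t < hi w" if "t \<in> {s1..s2}" for t
  proof -
    have "d1 < t" "t < d2" "t \<in> {-pi<..pi}" using that s assms(1,3) by auto
    then show ?thesis using gap circ_in_side_region_iff by blast
  qed
  have "\<exists>w\<in>L. lo w < s1 \<and> s2 < hi w"
    using cover arcs_nested s(2)
      by (rule nested_intervals_cover[where W = L and lo = lo and hi = hi])
  then obtain w where w: "w \<in> L" "lo w < s1" "s2 < hi w" by blast
  have "separates w (circ a0 s1) x0"
    by (rule iffD2[OF separates_iff[OF w(1) s(4)]]) (use w s(2) in linarith)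
  moreover have "separates w (circ a0 s2) x0"
    by (rule iffD2[OF separates_iff[OF w(1) s(5)]]) (use w s(2) in linarith)
  ultimately have "separates w q x0" using separates_closed_segment qseg by blast
  then show False using side_region_not_separates[OF q w(1)] by blast
qed

lemma gap_oriented_side:
  assumes "-pi \<le> d1" "d1 < d2" "d2 \<le> pi" "d2 - d1 < 2 * pi"
    and gap: "\<And>t. d1 < t \<Longrightarrow> t < d2 \<Longrightarrow> circ a0 t \<notin> side_region L x0"
    and ends: "circ a0 d1 \<in> side_region L x0" "circ a0 d2 \<in> side_region L x0"
    and not_chord: "\<not> (\<exists>a b. a \<noteq> b \<and> a \<in> S1 \<and> b \<in> S1 \<and> side_region L x0 = closed_segment a b)"
  shows "oriented_side (side_region L x0) (circ a0 d1) (circ a0 d2)"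
proof -
  let ?C = "side_region L x0" and ?c = "circ a0 d1" and ?d = "circ a0 d2"
  have nonneg: "\<forall>q\<in>?C. orient ?c ?d q \<ge> 0" using gap_halfplane[OF assms(1-4) gap] by blast
  have "orient ?c ?d (circ a0 ((d1 + d2) / 2)) < 0"
    using orient_circ_arc(1)[OF a0 assms(1-4)] assms(1-3) by auto
  then have cd: "?c \<noteq> ?d" by auto
  have seg: "closed_segment ?c ?d \<subseteq> ?C" using ends convex_side_region
    by (simp add: closed_segment_subset)
  have "?c \<in> S1" "?d \<in> S1" using a0 by simp_all
  have "\<not> ?C \<subseteq> closed_segment ?c ?d"
  proof
    assume "?C \<subseteq> closed_segment ?c ?d"
    then have "?C = closed_segment ?c ?d" using seg by blast
    then show False using not_chord cd \<open>?c \<in> S1\<close> \<open>?d \<in> S1\<close> by blast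
  qed
  then obtain q where q: "q \<in> ?C" "q \<notin> closed_segment ?c ?d" by blast
  then have "orient ?c ?d q \<noteq> 0"
    using orient_eq_0_imp_closed_segment[OF \<open>?c \<in> S1\<close> \<open>?d \<in> S1\<close> cd] side_region_subset by blast
  then have "q \<in> ?C" "orient ?c ?d q > 0" using nonneg q(1) by force+
  then show ?thesis unfolding oriented_side_def using a0 cd seg nonneg by auto
qed

lemma leaf_gap:
  assumes "y \<in> L" "a0 \<in> side_region L x0"
  obtains d1 d2 where "-pi \<le> d1" "d1 \<le> lo y" "hi y \<le> d2" "d2 \<le> pi" "d2 - d1 < 2 * pi"
    "\<And>t. d1 < t \<Longrightarrow> t < d2 \<Longrightarrow> circ a0 t \<notin> side_region L x0"
    "circ a0 d1 \<in> side_region L x0" "circ a0 d2 \<in> side_region L x0"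
proof -
  let ?C = "side_region L x0"
  define T where "T = {-pi..pi} \<inter> circ a0 -` ?C"
  have "closed T" unfolding T_def
    by (intro continuous_closed_preimage continuous_intros closed_side_region closed_atLeastAtMost)
  have ends: "-pi \<in> T" "pi \<in> T" using assms(2) a0 unfolding T_def by auto
  have y: "-pi \<le> lo y" "lo y < hi y" "hi y \<le> pi" using arc_range[OF assms(1)] by auto
  define d1 where "d1 = Sup (T \<inter> {..lo y})"
  define d2 where "d2 = Inf (T \<inter> {hi y..})"
  have "d1 \<in> T \<inter> {..lo y}" unfolding d1_def
    using \<open>closed T\<close> ends y
      by (intro closed_contains_Sup closed_Int) (auto intro: bdd_aboveI[of _ "lo y"])
  moreover have "d2 \<in> T \<inter> {hi y..}" unfolding d2_def
    using \<open>closed T\<close> ends y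
      by (intro closed_contains_Inf closed_Int) (auto intro: bdd_belowI[of _ "hi y"])
  ultimately have d: "-pi \<le> d1" "d1 \<le> lo y" "hi y \<le> d2" "d2 \<le> pi"
    "circ a0 d1 \<in> ?C" "circ a0 d2 \<in> ?C"
    unfolding T_def by auto
  have gap: "circ a0 t \<notin> ?C" if "d1 < t" "t < d2" for t
  proof
    assume C: "circ a0 t \<in> ?C"
    then have "t \<in> T" unfolding T_def using that d by auto
    consider "t \<le> lo y" | "hi y \<le> t" | "lo y < t" "t < hi y" by linarith
    then show False
    proof cases
      case 1
      then have "t \<le> d1" unfolding d1_def using \<open>t \<in> T\<close>
        by (intro cSup_upper) (auto intro: bdd_aboveI[of _ "lo y"])
      then show False using that by simp
    next
      case 2
      then have "d2 \<le> t" unfolding d2_def using \<open>t \<in> T\<close>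
        by (intro cInf_lower) (auto intro: bdd_belowI[of _ "hi y"])
      then show False using that by simp
    next
      case 3
      then show False using C circ_in_side_region_iff[of t] assms(1) that d by auto
    qed
  qed
  have "d2 - d1 < 2 * pi"
  proof (rule ccontr)
    assume "\<not> d2 - d1 < 2 * pi"
    then have "d1 < tb" "tb < d2" using d tb(1) by auto
    moreover have "circ a0 tb \<in> ?C" using circ_in_side_region_iff tb by auto
    ultimately show False using gap by blast
  qed
  then show thesis using that d gap by blast
qed

lemma leaf_in_cap:
  assumes "y \<in> L" "a0 \<in> side_region L x0"
    and not_chord: "\<not> (\<exists>a b. a \<noteq> b \<and> a \<in> S1 \<and> b \<in> S1 \<and> side_region L x0 = closed_segment a b)"
  obtains c d where "oriented_side (side_region L x0) c d" "\<forall>z\<in>y. orient c d z \<le> 0"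
proof -
  obtain d1 d2 where d: "-pi \<le> d1" "d1 \<le> lo y" "hi y \<le> d2" "d2 \<le> pi" "d2 - d1 < 2 * pi"
    and gap: "\<And>t. d1 < t \<Longrightarrow> t < d2 \<Longrightarrow> circ a0 t \<notin> side_region L x0"
    and ends: "circ a0 d1 \<in> side_region L x0" "circ a0 d2 \<in> side_region L x0"
    using leaf_gap[OF assms(1,2)] by blast
  have y: "-pi \<le> lo y" "lo y < hi y" "hi y \<le> pi" using arc_range[OF assms(1)] by auto
  have "oriented_side (side_region L x0) (circ a0 d1) (circ a0 d2)"
    using d y by (intro gap_oriented_side gap ends not_chord) auto
  moreover have "\<forall>z\<in>y. orient (circ a0 d1) (circ a0 d2) z \<le> 0"
  proof
    fix z assume "z \<in> y"
    then have "z = circ a0 (lo y) \<or> z = circ a0 (hi y)" using arc_ends[OF assms(1)] by blast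
    then show "orient (circ a0 d1) (circ a0 d2) z \<le> 0"
      using orient_circ_arc(2)[OF a0 d(1) _ d(4,5)] d y by auto
  qed
  ultimately show thesis using that by blast
qed

end

lemma oriented_side_cap_has_leaf:
  assumes L: "prelamination L" "x0 \<in> D2 - Geo L" and side: "oriented_side (side_region L x0) a b"
  obtains w1 w2 where "{w1, w2} \<in> L" "orient a b w1 \<le> 0" "orient a b w2 \<le> 0"
proof (rule ccontr)
  let ?C = "side_region L x0"
  note leaf_in_cap = that
  assume no_leaf: "\<not> thesis"
  have ab: "a \<in> S1" "b \<in> S1" "a \<noteq> b" "a \<in> ?C" "b \<in> ?C"
    using side unfolding oriented_side_def by auto
  obtain p where p: "p \<in> S1" "orient a b p < 0" using S1_orient_negative_exists[OF ab(1-3)] .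
  have "orient w1 w2 p * orient w1 w2 x0 \<ge> 0" if w: "{w1, w2} \<in> L" for w1 w2
  proof -
    have wS: "w1 \<in> S1" "w2 \<in> S1" "w1 \<noteq> w2" using prelamination_leaf[OF L(1) w] by auto
    have "\<not> (orient a b w1 \<le> 0 \<and> orient a b w2 \<le> 0)" using no_leaf leaf_in_cap w by blast
    then have ge: "orient a b w1 \<ge> 0" "orient a b w2 \<ge> 0"
      using leaf_same_side_of_oriented_side[OF L side w] by (auto simp: zero_le_mult_iff)
    have pa: "orient w1 w2 p * orient w1 w2 a \<ge> 0" "orient w1 w2 p * orient w1 w2 b \<ge> 0"
      using cap_same_side[OF ab(1,2) wS(1,2) p(1) ab(3) wS(3) ge p(2)] by auto
    have ax: "orient w1 w2 a * orient w1 w2 x0 \<ge> 0" "orient w1 w2 b * orient w1 w2 x0 \<ge> 0"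
      using side_region_orient[OF _ w] ab(4,5) by auto
    consider "orient w1 w2 a \<noteq> 0" | "orient w1 w2 b \<noteq> 0" | "orient w1 w2 a = 0" "orient w1 w2 b = 0"
      by blast
    then show ?thesis
    proof cases
      case 1
      then show ?thesis using sign_transfer[of _ "orient w1 w2 a"] pa(1) ax(1)
        by (simp add: mult.commute)
    next
      case 2
      then show ?thesis using sign_transfer[of _ "orient w1 w2 b"] pa(2) ax(2)
        by (simp add: mult.commute)
    next
      case 3
      then have "{a, b} = {w1, w2}" using orient_S1_eq_0_iff[OF wS(1,2) _ wS(3)] ab by auto
      then show ?thesis using no_leaf leaf_in_cap[of a b] w ab by auto
    qed
  qed
  then have "p \<in> ?C" using p(1) unfolding side_region_def by simp
  then show False using side p(2) unfolding oriented_side_def by fastforce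
qed

lemma side_region_leaf_in_cap:
  assumes L: "prelamination L" "x0 \<in> D2 - Geo L"
    and not_chord: "\<not> (\<exists>a b. a \<noteq> b \<and> a \<in> S1 \<and> b \<in> S1 \<and> side_region L x0 = closed_segment a b)"
    and side: "oriented_side (side_region L x0) a0 b0" and y: "y \<in> L"
  obtains c d where "oriented_side (side_region L x0) c d" "\<forall>z\<in>y. orient c d z \<le> 0"
proof -
  have base: "a0 \<in> S1" "a0 \<in> side_region L x0" and b0: "b0 \<in> S1" "b0 \<in> side_region L x0" "a0 \<noteq> b0"
    using side unfolding oriented_side_def by auto
  obtain lo hi where f: "\<And>w. w \<in> L \<Longrightarrow>
      -pi \<le> lo w \<and> lo w < hi w \<and> hi w \<le> pi \<and> w = {circ a0 (lo w), circ a0 (hi w)} \<and>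
      (\<forall>r\<in>{-pi<..pi}. separates w (circ a0 r) x0 \<longleftrightarrow> lo w < r \<and> r < hi w)"
    using leaf_cap_interval[OF L base] by metis
  define tb where "tb = angle_from a0 b0"
  have "tb \<noteq> pi" using angle_from_inj[OF base(1) b0(1) base(1)] angle_from_self[OF base(1)] b0(3)
    unfolding tb_def by auto
  then have tb: "tb \<in> {-pi<..<pi}" using angle_from_in_range[of a0 b0] unfolding tb_def by auto
  have tb_in: "circ a0 tb \<in> side_region L x0" using base(1) b0 unfolding tb_def by simp
  have "\<not> (lo w < tb \<and> tb < hi w)" if w: "w \<in> L" for w
  proof -
    have "tb \<in> {-pi<..pi}" using tb by auto
    then show ?thesis using f[OF w] side_region_not_separates[OF tb_in w] by blast
  qed
  then interpret leaf_arcs L x0 a0 lo hi tb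
    using L base(1) f tb by unfold_locales blast+
  show thesis using leaf_in_cap[OF y base(2) not_chord] that by blast
qed

section \<open>Connectedness of the linkage graph\<close>

lemma crossing_leaf_crosses_neighbour_side:
  assumes S1: "a \<in> S1" "b \<in> S1" "c \<in> S1" "d \<in> S1" "z1 \<in> S1" "z2 \<in> S1" "p \<in> S1" "q \<in> S1"
    and distinct: "a \<noteq> b" "c \<noteq> d" "p \<noteq> q" "{a, b} \<noteq> {c, d}"
    and sides: "orient a b c \<ge> 0" "orient a b d \<ge> 0" "orient c d a \<ge> 0" "orient c d b \<ge> 0"
    and crosses_ab: "orient a b z1 * orient a b z2 < 0"
    and cap: "orient c d p \<le> 0" "orient c d q \<le> 0"
    and crosses_pq: "orient p q z1 * orient p q z2 < 0"
  shows "orient c d z1 * orient c d z2 < 0"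
proof -
  have z12: "z1 \<noteq> z2" using crosses_ab by auto
  have "orient c d z1 < 0 \<or> orient c d z2 < 0"
    using cap_crossing[OF S1(3,4,7,8,5,6) distinct(2,3) cap crosses_pq] .
  moreover have "orient c d z' > 0"
    if "orient c d z < 0" "z' \<in> S1" "orient a b z * orient a b z' < 0" "z \<in> S1" for z z'
  proof -
    have "orient a b z > 0"
      using caps_disjoint[OF S1(3,4,1,2) that(4) distinct(2,1) _ sides(3,4,1,2) that(1)] distinct(4)
        by auto
    then have "orient a b z' < 0" using that(3) by (simp add: mult_less_0_iff)
    then show ?thesis using caps_disjoint[OF S1(1-4) that(2) distinct(1,2,4) sides] by blast
  qed
  ultimately show ?thesis
    using S1(5,6) crosses_ab by (auto simp: mult.commute mult_neg_pos mult_pos_neg)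
qed

lemma oriented_sides_linkage_edge:
  assumes "closed C" "oriented_side C a b" "oriented_side C c d" "{a, b} \<noteq> {c, d}"
    and "l \<in> L'" "crosses l {a, b}" "crosses l {c, d}"
  shows "linkage_edge C L' (Inl {a, b}) (Inl {c, d})"
  unfolding linkage_edge_def linkage_vertex_def leaf_meets_def
  using oriented_side_geodesic_side[OF assms(1,2)] oriented_side_geodesic_side[OF assms(1,3)] assms(4-7)
  by auto

lemma crossing_leaf_links_sides:
  assumes L: "prelamination L" "x0 \<in> D2 - Geo L"
    and not_chord: "\<not> (\<exists>a b. a \<noteq> b \<and> a \<in> S1 \<and> b \<in> S1 \<and> side_region L x0 = closed_segment a b)"
    and side: "oriented_side (side_region L x0) a b"
    and z: "z \<in> L'" "crosses z {a, b}" and z': "z' \<in> L" "crosses z z'"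
    and not_cap: "\<not> (\<forall>x\<in>z'. orient a b x \<le> 0)"
  obtains c d where "oriented_side (side_region L x0) c d" "\<forall>x\<in>z'. orient c d x \<le> 0"
    "linkage_edge (side_region L x0) L' (Inl {a, b}) (Inl {c, d})"
proof -
  let ?C = "side_region L x0"
  obtain z1 z2 where z12: "z = {z1, z2}" "z1 \<in> S1" "z2 \<in> S1" "z1 \<noteq> z2"
    using z(2) unfolding crosses_def is_leaf_def by blast
  obtain p q where pq: "z' = {p, q}" "p \<in> S1" "q \<in> S1" "p \<noteq> q"
    using prelamination_obtain_leaf[OF L(1) z'(1)] .
  have ab: "a \<in> S1" "b \<in> S1" "a \<noteq> b" using side unfolding oriented_side_def by auto
  obtain c d where cd: "oriented_side ?C c d" "\<forall>x\<in>z'. orient c d x \<le> 0"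
    using side_region_leaf_in_cap[OF L not_chord side z'(1)] by blast
  have ne: "{a, b} \<noteq> {c, d}" using oriented_side_eq[OF side cd(1)] not_cap cd(2) by auto
  have cdS: "c \<in> S1" "d \<in> S1" "c \<noteq> d" using cd(1) unfolding oriented_side_def by auto
  have "orient a b z1 * orient a b z2 < 0"
    using z(2) z12(1) crosses_iff_orient[OF z12(2,3) ab(1,2) z12(4) ab(3)] by simp
  moreover have "orient c d p \<le> 0" "orient c d q \<le> 0" using cd(2) pq(1) by auto
  moreover have "orient p q z1 * orient p q z2 < 0"
    using z'(2) z12(1) pq(1) crosses_iff_orient[OF z12(2,3) pq(2,3) z12(4) pq(4)] by simp
  ultimately have "orient c d z1 * orient c d z2 < 0"
    using crossing_leaf_crosses_neighbour_side[OF ab(1,2) cdS(1,2) z12(2,3) pq(2,3) ab(3) cdS(3) pq(4) ne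
        oriented_sides_mutual[OF side cd(1)]] by blast
  then have "crosses z {c, d}"
    using crosses_iff_orient[OF z12(2,3) cdS(1,2) z12(4) cdS(3)] z12(1) by simp
  then have "linkage_edge ?C L' (Inl {a, b}) (Inl {c, d})"
    using oriented_sides_linkage_edge[OF closed_side_region side cd(1) ne z] by blast
  then show thesis using that cd by blast
qed

text \<open>The invariant carried along a chain of crossing leaves when linking two sides of \<open>C\<close>.\<close>

definition touches_side :: "complex set \<Rightarrow> (complex set \<Rightarrow> bool) \<Rightarrow> complex set \<Rightarrow> bool" where
  "touches_side C R z \<longleftrightarrow>
     (\<exists>a b. oriented_side C a b \<and> R {a, b} \<and> ((\<forall>p\<in>z. orient a b p \<le> 0) \<or> crosses z {a, b}))"

lemma leaf_not_crosses_side: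
  assumes "prelamination L" "x0 \<in> D2 - Geo L" "oriented_side (side_region L x0) a b" "z \<in> L"
  shows "\<not> crosses z {a, b}"
proof
  assume cr: "crosses z {a, b}"
  obtain z1 z2 where z: "z = {z1, z2}" "z1 \<in> S1" "z2 \<in> S1" "z1 \<noteq> z2"
    using prelamination_obtain_leaf[OF assms(1,4)] .
  have "a \<in> S1" "b \<in> S1" "a \<noteq> b" using assms(3) unfolding oriented_side_def by auto
  then have "orient a b z1 * orient a b z2 < 0" using cr z crosses_iff_orient by blast
  then show False using leaf_same_side_of_oriented_side[OF assms(1-3)] assms(4) z(1) by force
qed

lemma touches_side_crossing_step:
  assumes L: "prelamination L" "x0 \<in> D2 - Geo L" and L': "prelamination L'"
    and not_chord: "\<not> (\<exists>a b. a \<noteq> b \<and> a \<in> S1 \<and> b \<in> S1 \<and> side_region L x0 = closed_segment a b)"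
    and R_closed:
      "\<forall>a b c d. R {a, b} \<and> linkage_edge (side_region L x0) L' (Inl {a, b}) (Inl {c, d}) \<longrightarrow> R {c, d}"
    and touch: "touches_side (side_region L x0) R z"
    and z: "z \<in> L \<union> L'" and z': "z' \<in> L \<union> L'" and cr: "crosses z z'"
  shows "touches_side (side_region L x0) R z'"
proof -
  let ?C = "side_region L x0"
  have leaf: "\<exists>u v. w = {u, v} \<and> u \<in> S1 \<and> v \<in> S1 \<and> u \<noteq> v" if "w \<in> L \<union> L'" for w
    using that prelamination_obtain_leaf[OF L(1)] prelamination_obtain_leaf[OF L'] by blast
  obtain z1 z2 where z12: "z = {z1, z2}" "z1 \<in> S1" "z2 \<in> S1" "z1 \<noteq> z2" using leaf[OF z] by blast
  obtain p q where pq: "z' = {p, q}" "p \<in> S1" "q \<in> S1" "p \<noteq> q" using leaf[OF z'] by blast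
  have "orient p q z1 * orient p q z2 < 0" using crosses_iff_orient z12 pq cr by blast
  then have X: "orient z1 z2 p * orient z1 z2 q < 0"
    using orient_cross_sym[OF pq(2,3) z12(2,3) pq(4) z12(4)] by simp
  obtain a b where side: "oriented_side ?C a b" "R {a, b}"
    and pos: "(\<forall>x\<in>z. orient a b x \<le> 0) \<or> crosses z {a, b}"
    using touch unfolding touches_side_def by blast
  have ab: "a \<in> S1" "b \<in> S1" "a \<noteq> b" using side(1) unfolding oriented_side_def by auto
  show ?thesis
  proof (cases "\<forall>x\<in>z'. orient a b x \<le> 0")
    case True
    then show ?thesis unfolding touches_side_def using side by blast
  next
    case not_cap: False
    from pos show ?thesis
    proof
      assume "\<forall>x\<in>z. orient a b x \<le> 0"
      then have "orient a b p < 0 \<or> orient a b q < 0"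
        using cap_crossing[OF ab(1,2) z12(2,3) pq(2,3) ab(3) z12(4) _ _ X] z12(1) by auto
      then have "orient a b p * orient a b q < 0" using not_cap pq(1)
        by (auto simp: mult_less_0_iff)
      then have "crosses z' {a, b}" using crosses_iff_orient pq ab by blast
      then show ?thesis unfolding touches_side_def using side by blast
    next
      assume crz: "crosses z {a, b}"
      then have "z \<in> L'" using z leaf_not_crosses_side[OF L side(1)] by blast
      then have "z' \<in> L" using z' cr L' unfolding prelamination_def by blast
      then obtain c d where "oriented_side ?C c d" "\<forall>x\<in>z'. orient c d x \<le> 0"
          "linkage_edge ?C L' (Inl {a, b}) (Inl {c, d})"
        using crossing_leaf_links_sides[OF L not_chord side(1) \<open>z \<in> L'\<close> crz _ cr not_cap] by blast
      then show ?thesis using R_closed side(2) unfolding touches_side_def by blast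
    qed
  qed
qed

lemma cap_leaf_touches_only_own_side:
  assumes L: "prelamination L" "x0 \<in> D2 - Geo L"
    and side: "oriented_side (side_region L x0) c d"
    and k: "{k1, k2} \<in> L" "orient c d k1 \<le> 0" "orient c d k2 \<le> 0"
    and touch: "touches_side (side_region L x0) R {k1, k2}"
  shows "R {c, d}"
proof -
  let ?C = "side_region L x0"
  obtain a b where ab_side: "oriented_side ?C a b" "R {a, b}"
    and pos: "(\<forall>x\<in>{k1, k2}. orient a b x \<le> 0) \<or> crosses {k1, k2} {a, b}"
    using touch unfolding touches_side_def by blast
  then have cap: "orient a b k1 \<le> 0" "orient a b k2 \<le> 0"
    using leaf_not_crosses_side[OF L ab_side(1) k(1)] by auto
  show ?thesis
  proof (rule ccontr)
    assume "\<not> R {c, d}"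
    then have ne: "{a, b} \<noteq> {c, d}" using ab_side(2) by auto
    have ab: "a \<in> S1" "b \<in> S1" "a \<noteq> b" and cd: "c \<in> S1" "d \<in> S1" "c \<noteq> d"
      using ab_side(1) side unfolding oriented_side_def by auto
    have kS: "k1 \<in> S1" "k2 \<in> S1" "k1 \<noteq> k2" using prelamination_leaf[OF L(1) k(1)] by auto
    note mutual = oriented_sides_mutual[OF ab_side(1) side]
    have "k \<in> {a, b} \<and> k \<in> {c, d}" if "k \<in> {k1, k2}" for k
    proof -
      have kS': "k \<in> S1" and le: "orient a b k \<le> 0" "orient c d k \<le> 0" using that kS cap k(2,3)
        by auto
      have "\<not> orient a b k < 0"
        using caps_disjoint[OF ab(1,2) cd(1,2) kS' ab(3) cd(3) ne mutual] le(2) by auto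
      moreover have "\<not> orient c d k < 0"
        using caps_disjoint[OF cd(1,2) ab(1,2) kS' cd(3) ab(3) _ mutual(3,4,1,2)] ne le(1) by auto
      ultimately show ?thesis
        using le orient_S1_eq_0_iff[OF ab(1,2) kS' ab(3)] orient_S1_eq_0_iff[OF cd(1,2) kS' cd(3)]
        by auto
    qed
    then have "{a, b} = {k1, k2}" "{c, d} = {k1, k2}" using kS(3) by (auto simp: doubleton_eq_iff)
    then show False using ne by simp
  qed
qed

lemma oriented_sides_linked:
  assumes L: "prelamination L" "x0 \<in> D2 - Geo L" and L': "prelamination L'"
    and not_chord: "\<not> (\<exists>a b. a \<noteq> b \<and> a \<in> S1 \<and> b \<in> S1 \<and> side_region L x0 = closed_segment a b)"
    and chain: "\<forall>l\<in>L \<union> L'. \<forall>m\<in>L \<union> L'. (\<lambda>x y. x \<in> L \<union> L' \<and> y \<in> L \<union> L' \<and> crosses x y)\<^sup>*\<^sup>* l m"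
    and ab: "oriented_side (side_region L x0) a b" and cd: "oriented_side (side_region L x0) c d"
  shows "(linkage_edge (side_region L x0) L')\<^sup>*\<^sup>* (Inl {a, b}) (Inl {c, d})"
proof -
  let ?C = "side_region L x0"
  define R where "R s \<longleftrightarrow> (linkage_edge ?C L')\<^sup>*\<^sup>* (Inl {a, b}) (Inl s)" for s
  have R_closed:
    "\<forall>a' b' c' d'. R {a', b'} \<and> linkage_edge ?C L' (Inl {a', b'}) (Inl {c', d'}) \<longrightarrow> R {c', d'}"
    unfolding R_def by (blast intro: rtranclp.rtrancl_into_rtrancl)
  obtain k1 k2 where k: "{k1, k2} \<in> L" "orient a b k1 \<le> 0" "orient a b k2 \<le> 0"
    using oriented_side_cap_has_leaf[OF L ab] .
  obtain k1' k2' where k': "{k1', k2'} \<in> L" "orient c d k1' \<le> 0" "orient c d k2' \<le> 0"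
    using oriented_side_cap_has_leaf[OF L cd] .
  have start: "touches_side ?C R {k1, k2}" unfolding touches_side_def R_def using ab k by auto
  have "(\<lambda>x y. x \<in> L \<union> L' \<and> y \<in> L \<union> L' \<and> crosses x y)\<^sup>*\<^sup>* {k1, k2} {k1', k2'}"
    using chain k(1) k'(1) by blast
  then have "touches_side ?C R {k1', k2'}"
  proof (induction rule: rtranclp_induct)
    case base
    show ?case by (rule start)
  next
    case (step y z)
    then show ?case using touches_side_crossing_step[OF L L' not_chord R_closed] by blast
  qed
  then show ?thesis using cap_leaf_touches_only_own_side[OF L cd k'] unfolding R_def by blast
qed

lemma linkage_vertex_linked_to_side:
  assumes "closed C" "convex C" "C \<subseteq> D2"
    and not_chord: "\<not> (\<exists>a b. a \<noteq> b \<and> a \<in> S1 \<and> b \<in> S1 \<and> C = closed_segment a b)"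
    and u: "linkage_vertex C L' u"
  obtains a b where "oriented_side C a b" "(linkage_edge C L')\<^sup>*\<^sup>* u (Inl {a, b})"
    "(linkage_edge C L')\<^sup>*\<^sup>* (Inl {a, b}) u"
proof (cases u)
  case (Inl s)
  then have "geodesic_side C s" using u unfolding linkage_vertex_def by simp
  then obtain a b where "s = {a, b}" "oriented_side C a b"
    using geodesic_side_imp_oriented_side[OF assms(1-3) not_chord] by blast
  then show thesis using that Inl by blast
next
  case (Inr I)
  then obtain s where s: "geodesic_side C s" "dense_arc_for L' s I"
    using u unfolding linkage_vertex_def ideal_segment_def by auto
  obtain a b where ab: "s = {a, b}" "oriented_side C a b"
    using geodesic_side_imp_oriented_side[OF assms(1-3) not_chord s(1)] by blast
  have "cross_endpoints L' s \<inter> int_S1 I \<noteq> {}"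
    using s(2) unfolding dense_arc_for_def by auto
  then obtain l where "l \<in> L'" "crosses l s" "l \<inter> int_S1 I \<noteq> {}"
    unfolding cross_endpoints_def by blast
  then have "linkage_edge C L' (Inr I) (Inl s)" "linkage_edge C L' (Inl s) (Inr I)"
    using u Inr s(1) unfolding linkage_edge_def linkage_vertex_def leaf_meets_def by auto
  then show thesis using that[OF ab(2)] ab(1) Inr by blast
qed

lemma nontrivial_region_linkage_connected:
  assumes L: "prelamination L" and L': "prelamination L'"
    and chain: "\<forall>l\<in>L \<union> L'. \<forall>m\<in>L \<union> L'. (\<lambda>x y. x \<in> L \<union> L' \<and> y \<in> L \<union> L' \<and> crosses x y)\<^sup>*\<^sup>* l m"
    and "nontrivial_region L C"
  shows "linkage_connected C L'"
  unfolding linkage_connected_def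
proof (intro allI impI)
  obtain x0 where x0: "x0 \<in> D2 - Geo L" "C = side_region L x0"
    and not_chord: "\<not> (\<exists>a b. a \<noteq> b \<and> a \<in> S1 \<and> b \<in> S1 \<and> C = closed_segment a b)"
    using nontrivial_region_side_region[OF assms(4) L] by blast
  have C: "closed C" "convex C" "C \<subseteq> D2"
    unfolding x0(2) by (rule closed_side_region convex_side_region side_region_subset)+
  fix u v assume "linkage_vertex C L' u \<and> linkage_vertex C L' v"
  then obtain a b c d where "oriented_side C a b" "(linkage_edge C L')\<^sup>*\<^sup>* u (Inl {a, b})"
    and "oriented_side C c d" "(linkage_edge C L')\<^sup>*\<^sup>* (Inl {c, d}) v"
    using linkage_vertex_linked_to_side[OF C not_chord] by metis
  moreover have "(linkage_edge C L')\<^sup>*\<^sup>* (Inl {a, b}) (Inl {c, d})"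
    using oriented_sides_linked[OF L x0(1) L' _ chain] not_chord calculation(1,3) unfolding x0(2)
      by blast
  ultimately show "(linkage_edge C L')\<^sup>*\<^sup>* u v" by (meson rtranclp_trans)
qed

theorem lemma3p12:
  assumes "fully_transverse Lp Lm"
  shows "(\<forall>C. nontrivial_region Lp C \<longrightarrow> linkage_connected C Lm) \<and>
         (\<forall>C. nontrivial_region Lm C \<longrightarrow> linkage_connected C Lp)"
proof -
  have P: "prelamination Lp" "prelamination Lm" using assms unfolding fully_transverse_def by auto
  have chain: "\<forall>l\<in>Lp \<union> Lm. \<forall>m\<in>Lp \<union> Lm. (\<lambda>x y. x \<in> Lp \<union> Lm \<and> y \<in> Lp \<union> Lm \<and> crosses x y)\<^sup>*\<^sup>* l m"
    using assms unfolding fully_transverse_def by blast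
  then have chain': "\<forall>l\<in>Lm \<union> Lp. \<forall>m\<in>Lm \<union> Lp. (\<lambda>x y. x \<in> Lm \<union> Lp \<and> y \<in> Lm \<union> Lp \<and> crosses x y)\<^sup>*\<^sup>* l m"
    by (simp add: Un_commute)
  show ?thesis
    using nontrivial_region_linkage_connected[OF P chain] nontrivial_region_linkage_connected[OF P(2,1) chain']
    by blast
qed

end
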